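(* Assume (A1), (A2), (A3), (A4). Then the multi-cluster game in which each cluster $h$ solves $\min_{\mathbf x^h\in\mathbb R^{q_h}}F^h(\mathbf x^h,\mathbf x^{-h})$, $F^h=\sum_{i=1}^{n_h}f_i^h$, has a unique Nash equilibrium $\mathbf x^*\in\mathbb R^q$, i.e. a unique point with $F^h((\mathbf x^h)^*,(\mathbf x^{-h})^* )\le F^h(\mathbf x^h,(\mathbf x^{-h})^* )$ for all $\mathbf x^h\in\mathbb R^{q_h}$ and all $h$; it satisfies $\sum_{i=1}^{n_h}\nabla_{\mathbf x^h}f_i^h(\mathbf x^* )=\mathbf 0$ for all $h$. Moreover, there exists a step-size $\alpha>0$ such that for every initial $\mathbf x(0)$ the iterates of the algorithm with initialization $\mathbf y^h(0)=\mathbf G^h(0)$ satisfy $\lim_{k\to\infty}\mathbf x_i(k)=\mathbf x^*$ for all agents $i=1,\dots,n$ (so all agents reach consensus on $\mathbf x^*$), and the convergence is linear (geometric): there exist $C>0$ and $\rho\in(0,1)$ with $\|\mathbf x_i(k)-\mathbf x^*\|_2\le C\rho^k$ for all $i$ and $k$.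
   Context: Setting: $n$ agents partitioned into $H$ disjoint clusters, cluster $h$ containing $n_h$ agents, ordered so that cluster 1 comes first, then cluster 2, etc. Decision vector $\mathbf x=(\mathbf x^1,\dots,\mathbf x^H)\in\mathbb R^q$, $\mathbf x^h\in\mathbb R^{q_h}$, $q=\sum_hq_h$; $\mathbf x^{-h}$ denotes the components other than $\mathbf x^h$. The $i$-th agent of cluster $h$ has cost $f_i^h:\mathbb R^q\to\mathbb R$. (A1): for each $h$, $\mathbf C^h\in\mathbb R^{n_h\times n_h}$ is nonnegative, column-stochastic ($\mathbf 1^T\mathbf C^h=\mathbf 1^T$), with positive diagonal, and its directed graph (edge $j\to i$ iff $\mathbf C^h_{ij}>0$) is strongly connected. (A2): $\mathbf R\in\mathbb R^{n\times n}$ is nonnegative, row-stochastic ($\mathbf R\mathbf 1=\mathbf 1$), with positive diagonal and strongly connected directed graph. (A3): each $f_i^h$ is convex and continuously differentiable, and there is $L>0$ with $\|\nabla_{\mathbf x^h}f_i^h(\mathbf x)-\nabla_{\mathbf x^h}f_i^h(\tilde{\mathbf x})\|_2\le L\|\mathbf x-\tilde{\mathbf x}\|_2$ for all $\mathbf x,\tilde{\mathbf x}$ and all $i,h$. (A4): the game mapping $\mathbf M(\mathbf x)=(\mathbf g^1(\mathbf x),\dots,\mathbf g^H(\mathbf x))$, $\mathbf g^h(\mathbf x)=\sum_{i=1}^{n_h}\nabla_{\mathbf x^h}f_i^h(\mathbf x)$, is strongly monotone on $\mathbb R^q$ with constant $\mu>0$: $(\mathbf M(\mathbf x)-\mathbf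 M(\mathbf y))^T(\mathbf x-\mathbf y)\ge\mu\|\mathbf x-\mathbf y\|_2^2$. Algorithm (constant step-size $\alpha>0$): $\mathbf x(k)\in\mathbb R^{n\times q}$ has $i$-th row $\mathbf x_i(k)^T$ (agent $i$'s estimate of the whole decision vector); $\mathbf y^h(k)\in\mathbb R^{n_h\times q_h}$ (tracking variables of cluster $h$); $\mathbf Y(k)=\operatorname{diag}\{\mathbf y^1(k),\dots,\mathbf y^H(k)\}\in\mathbb R^{n\times q}$ (block diagonal); $\mathbf G^h(k)\in\mathbb R^{n_h\times q_h}$ has $i$-th row $\nabla_{\mathbf x^h}f_i^h(\mathbf x_i(k))^T$ ($\mathbf x_i(k)$ the estimate of the $i$-th agent of cluster $h$). Updates $\mathbf x(k+1)=\mathbf R(\mathbf x(k)-\alpha\mathbf Y(k))$, $\mathbf y^h(k+1)=\mathbf C^h\mathbf y^h(k)+\mathbf G^h(k+1)-\mathbf G^h(k)$, $k\ge0$. *)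

theory Defs
  imports "HOL-Analysis.Analysis"
begin

text \<open>Agents form a finite type 'a, clusters a finite type 'h, and the
coordinates of the decision vector x in R^q a finite type 'q.
cl a is the cluster of agent a, blk j is the cluster owning coordinate j
(so x^h = coordinates j with blk j = h). Vectors in R^(q_h) are represented as
vectors in R^q that vanish outside the block h.\<close>

text \<open>Partial gradient (nabla_{x^h} f) of agent a, h = cl a, embedded in R^q
(zero outside block h); grad a x is the full gradient of f a at x.\<close>
definition pgrad :: "('q \<Rightarrow> 'h) \<Rightarrow> ('a \<Rightarrow> 'h) \<Rightarrow> ('a \<Rightarrow> real^'q \<Rightarrow> real^'q)
                     \<Rightarrow> 'a \<Rightarrow> real^'q \<Rightarrow> real^'q" where
  "pgrad blk cl grad a x = (\<chi> j. if blk j = cl a then grad a x $ j else 0)"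

definition game_map :: "('q \<Rightarrow> 'h) \<Rightarrow> ('a::finite \<Rightarrow> 'h) \<Rightarrow> ('a \<Rightarrow> real^'q \<Rightarrow> real^'q)
                        \<Rightarrow> real^'q \<Rightarrow> real^'q" where
  "game_map blk cl grad x = (\<chi> j. \<Sum>a\<in>{a. cl a = blk j}. grad a x $ j)"

definition cluster_cost :: "('a::finite \<Rightarrow> 'h) \<Rightarrow> ('a \<Rightarrow> real^'q \<Rightarrow> real) \<Rightarrow> 'h \<Rightarrow> real^'q \<Rightarrow> real" where
  "cluster_cost cl f h x = (\<Sum>a\<in>{a. cl a = h}. f a x)"

definition upd_block :: "('q \<Rightarrow> 'h) \<Rightarrow> 'h \<Rightarrow> real^'q \<Rightarrow> real^'q \<Rightarrow> real^'q" where
  "upd_block blk h x z = (\<chi> j. if blk j = h then z $ j else x $ j)"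

definition is_NE :: "('q \<Rightarrow> 'h) \<Rightarrow> ('a::finite \<Rightarrow> 'h) \<Rightarrow> ('a \<Rightarrow> real^'q \<Rightarrow> real) \<Rightarrow> real^'q \<Rightarrow> bool" where
  "is_NE blk cl f xs \<longleftrightarrow>
     (\<forall>h z. cluster_cost cl f h xs \<le> cluster_cost cl f h (upd_block blk h xs z))"

definition strongly_connected_on :: "'n set \<Rightarrow> real^'n^'n \<Rightarrow> bool" where
  "strongly_connected_on S A \<longleftrightarrow>
     (\<forall>u\<in>S. \<forall>v\<in>S. (u, v) \<in> {(j, i). A $ i $ j > 0}\<^sup>*)"

definition A1 :: "('a::finite \<Rightarrow> 'h) \<Rightarrow> real^'a^'a \<Rightarrow> bool" where
  "A1 cl C \<longleftrightarrow>
     (\<forall>i j. cl i \<noteq> cl j \<longrightarrow> C $ i $ j = 0) \<and>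
     (\<forall>i j. C $ i $ j \<ge> 0) \<and>
     (\<forall>j. (\<Sum>i\<in>{i. cl i = cl j}. C $ i $ j) = 1) \<and>
     (\<forall>i. C $ i $ i > 0) \<and>
     (\<forall>h. strongly_connected_on {a. cl a = h} C)"

definition A2 :: "real^'a::finite^'a \<Rightarrow> bool" where
  "A2 R \<longleftrightarrow>
     (\<forall>i j. R $ i $ j \<ge> 0) \<and> (\<forall>i. (\<Sum>j\<in>UNIV. R $ i $ j) = 1) \<and>
     (\<forall>i. R $ i $ i > 0) \<and> strongly_connected_on UNIV R"

text \<open>Iterates (x(k), y(k)): x(k) a is the estimate of agent a (row a of x(k));
y(k) a is row a of Y(k) = diag{y^1(k),...,y^H(k)}, i.e. the tracking vector of a
embedded in R^q with zeros outside block cl a.\<close>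
fun iter :: "('q \<Rightarrow> 'h) \<Rightarrow> ('a::finite \<Rightarrow> 'h) \<Rightarrow> ('a \<Rightarrow> real^'q \<Rightarrow> real^'q)
             \<Rightarrow> real^'a^'a \<Rightarrow> real^'a^'a \<Rightarrow> real \<Rightarrow> ('a \<Rightarrow> real^'q) \<Rightarrow> nat
             \<Rightarrow> ('a \<Rightarrow> real^'q) \<times> ('a \<Rightarrow> real^'q)" where
  "iter blk cl grad R C \<alpha> x0 0 = (x0, \<lambda>a. pgrad blk cl grad a (x0 a))"
| "iter blk cl grad R C \<alpha> x0 (Suc k) =
     (let x = fst (iter blk cl grad R C \<alpha> x0 k);
          y = snd (iter blk cl grad R C \<alpha> x0 k);
          x' = (\<lambda>a. \<Sum>b\<in>UNIV. R $ a $ b *\<^sub>R (x b - \<alpha> *\<^sub>R y b))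
      in (x', \<lambda>a. (\<Sum>b\<in>UNIV. C $ a $ b *\<^sub>R y b)
                   + pgrad blk cl grad a (x' a) - pgrad blk cl grad a (x a)))"

end

theory Submission
  imports Defs
begin

(* The stationary point of the game is unique and is the Nash equilibrium because
   the game map M is strongly monotone and Lipschitz (x - gamma M x is a contraction) and each
   cluster cost is convex in its own block.  For the algorithm, write each iterate as consensus
   plus deviation.  Perron-Frobenius theory for the irreducible aperiodic matrices R and C^T
   (proved here via Doeblin's coefficient of ergodicity) gives norms in which R and C contract
   off their fixed subspaces.  Because C is column stochastic on each cluster, Y keeps tracking
   the cluster sums of the partial gradients; hence the u-weighted average of the estimates
   performs a gradient step on a positively rescaled game map, which contracts.  The consensus,
   optimality and tracking errors thus satisfy a coupled linear recursion, and a small-gain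
   argument with a suitable weighting and a small step size makes it jointly contracting. *)

section \<open>Powers of block-stochastic kernels\<close>

text \<open>Square matrices over a finite index type are represented as kernels \<open>'a \<Rightarrow> 'a \<Rightarrow> real\<close>;
  \<open>kpow P k\<close> is the \<open>k\<close>-th matrix power.\<close>
fun kpow :: "('a::finite \<Rightarrow> 'a \<Rightarrow> real) \<Rightarrow> nat \<Rightarrow> 'a \<Rightarrow> 'a \<Rightarrow> real" where
  "kpow P 0 i j = of_bool (i = j)"
| "kpow P (Suc k) i j = (\<Sum>l\<in>UNIV. P i l * kpow P k l j)"

lemma kpow_add: "kpow P (m + k) i j = (\<Sum>l\<in>UNIV. kpow P m i l * kpow P k l j)"
proof (induction m arbitrary: i)
  case (Suc m)
  have "kpow P (Suc m + k) i j = (\<Sum>r\<in>UNIV. \<Sum>l\<in>UNIV. P i r * kpow P m r l * kpow P k l j)"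
    by (simp add: Suc sum_distrib_left mult.assoc)
  also have "\<dots> = (\<Sum>l\<in>UNIV. (\<Sum>r\<in>UNIV. P i r * kpow P m r l) * kpow P k l j)"
    by (subst sum.swap) (simp add: sum_distrib_right)
  finally show ?case by simp
qed simp

lemma kpow_Suc_right: "kpow P (Suc k) i j = (\<Sum>l\<in>UNIV. kpow P k i l * P l j)"
  using kpow_add[of P k 1 i j] by simp

lemma kpow_transpose: "kpow (\<lambda>i j. P j i) k i j = kpow P k j i"
proof (induction k arbitrary: i)
  case (Suc k)
  have "kpow (\<lambda>i j. P j i) (Suc k) i j = (\<Sum>l\<in>UNIV. kpow P k j l * P l i)"
    using Suc by (simp add: mult.commute)
  then show ?case by (simp only: kpow_Suc_right)
qed auto

lemma kpow_diff_absorbing: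
  assumes PQ: "\<And>i j. (\<Sum>l\<in>UNIV. P i l * Q l j) = Q i j"
    and QP: "\<And>i j. (\<Sum>l\<in>UNIV. Q i l * P l j) = Q i j"
    and QQ: "\<And>i j. (\<Sum>l\<in>UNIV. Q i l * Q l j) = Q i j"
  shows "kpow (\<lambda>i j. P i j - Q i j) (Suc k) i j = kpow P (Suc k) i j - Q i j"
proof (induction k arbitrary: i)
  case (Suc k)
  have QPk: "(\<Sum>l\<in>UNIV. Q i l * kpow P m l j) = Q i j" for i m
  proof (induction m arbitrary: j)
    case (Suc m)
    have "(\<Sum>l\<in>UNIV. Q i l * kpow P (Suc m) l j)
        = (\<Sum>r\<in>UNIV. (\<Sum>l\<in>UNIV. Q i l * kpow P m l r) * P r j)"
      unfolding kpow_Suc_right sum_distrib_left sum_distrib_right mult.assoc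
      by (rule sum.swap)
    then show ?case by (simp add: Suc QP)
  qed simp
  have "kpow (\<lambda>i j. P i j - Q i j) (Suc (Suc k)) i j
      = (\<Sum>l\<in>UNIV. (P i l - Q i l) * (kpow P (Suc k) l j - Q l j))"
    by (simp only: kpow.simps(2)[of _ "Suc k"] Suc)
  also have "\<dots> = (\<Sum>l\<in>UNIV. P i l * kpow P (Suc k) l j) - (\<Sum>l\<in>UNIV. P i l * Q l j)
      - (\<Sum>l\<in>UNIV. Q i l * kpow P (Suc k) l j) + (\<Sum>l\<in>UNIV. Q i l * Q l j)"
    by (simp add: algebra_simps sum_subtractf sum.distrib)
  also have "\<dots> = kpow P (Suc (Suc k)) i j - Q i j"
    by (simp only: PQ QQ QPk kpow.simps(2)[of _ "Suc k"])
  finally show ?case .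
qed simp

text \<open>Doeblin's estimate: it contracts the spread of the columns of a stochastic matrix with a
  uniformly positive power.\<close>
lemma weighted_average_diff_le:
  fixes a b z :: "'i \<Rightarrow> real"
  assumes S: "finite S" "S \<noteq> {}"
    and a: "sum a S = 1" "\<And>l. l \<in> S \<Longrightarrow> \<epsilon> \<le> a l"
    and b: "sum b S = 1" "\<And>l. l \<in> S \<Longrightarrow> \<epsilon> \<le> b l"
    and z: "\<And>l. l \<in> S \<Longrightarrow> lo \<le> z l" "\<And>l. l \<in> S \<Longrightarrow> z l \<le> hi"
    and \<epsilon>: "0 \<le> \<epsilon>"
  shows "(\<Sum>l\<in>S. a l * z l) - (\<Sum>l\<in>S. b l * z l) \<le> (1 - \<epsilon>) * (hi - lo)"
proof -
  have "(\<Sum>l\<in>S. a l * z l) = hi - (\<Sum>l\<in>S. a l * (hi - z l))"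
    using a(1) by (simp add: right_diff_distrib sum_subtractf sum_distrib_right[symmetric])
  also have "\<dots> \<le> hi - (\<Sum>l\<in>S. \<epsilon> * (hi - z l))"
    using a(2) z(2) by (intro diff_left_mono sum_mono mult_right_mono) auto
  finally have up: "(\<Sum>l\<in>S. a l * z l) \<le> hi - (\<Sum>l\<in>S. \<epsilon> * (hi - z l))" .
  have "lo + (\<Sum>l\<in>S. \<epsilon> * (z l - lo)) \<le> lo + (\<Sum>l\<in>S. b l * (z l - lo))"
    using b(2) z(1) by (intro add_left_mono sum_mono mult_right_mono) auto
  also have "\<dots> = (\<Sum>l\<in>S. b l * z l)"
    using b(1) by (simp add: right_diff_distrib sum_subtractf sum_distrib_right[symmetric])
  finally have low: "lo + (\<Sum>l\<in>S. \<epsilon> * (z l - lo)) \<le> (\<Sum>l\<in>S. b l * z l)" .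
  have spread: "0 \<le> hi - lo"
    using S z by fastforce
  have "(\<Sum>l\<in>S. \<epsilon> * (hi - z l)) + (\<Sum>l\<in>S. \<epsilon> * (z l - lo)) = \<epsilon> * card S * (hi - lo)"
    by (simp add: sum.distrib[symmetric] algebra_simps)
  moreover have "\<epsilon> * 1 * (hi - lo) \<le> \<epsilon> * card S * (hi - lo)"
    using S spread \<epsilon> by (intro mult_right_mono mult_left_mono) (auto simp: Suc_le_eq card_gt_0_iff)
  ultimately show ?thesis
    using up low by (simp add: algebra_simps)
qed

locale block_stochastic =
  fixes cl :: "'a::finite \<Rightarrow> 'h" and P :: "'a \<Rightarrow> 'a \<Rightarrow> real"
  assumes cross_zero: "cl i \<noteq> cl j \<Longrightarrow> P i j = 0"
    and nonneg: "0 \<le> P i j"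
    and row_sum: "(\<Sum>j\<in>UNIV. P i j) = 1"
    and diag_pos: "0 < P i i"
    and connected: "cl i = cl j \<Longrightarrow> (j, i) \<in> {(j, i). 0 < P i j}\<^sup>*"
begin

lemma kpow_nonneg: "0 \<le> kpow P k i j"
  by (induction k arbitrary: i) (auto intro!: sum_nonneg mult_nonneg_nonneg nonneg)

lemma kpow_row_sum: "(\<Sum>j\<in>UNIV. kpow P k i j) = 1"
proof (induction k arbitrary: i)
  case (Suc k)
  have "(\<Sum>j\<in>UNIV. kpow P (Suc k) i j) = (\<Sum>l\<in>UNIV. P i l * (\<Sum>j\<in>UNIV. kpow P k l j))"
    unfolding kpow.simps sum_distrib_left by (rule sum.swap)
  then show ?case by (simp add: Suc row_sum)
qed simp

lemma kpow_cross_zero: "cl i \<noteq> cl j \<Longrightarrow> kpow P k i j = 0"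
proof (induction k arbitrary: i)
  case (Suc k)
  have "P i l * kpow P k l j = 0" for l
    by (metis Suc cross_zero mult_eq_0_iff)
  then show ?case by (simp add: sum.neutral)
qed auto

lemma kpow_le_1: "kpow P k i j \<le> 1"
proof -
  have "kpow P k i j \<le> (\<Sum>j\<in>UNIV. kpow P k i j)"
    by (rule member_le_sum) (auto simp: kpow_nonneg)
  then show ?thesis by (simp add: kpow_row_sum)
qed

lemma le_1: "P i j \<le> 1"
  using kpow_le_1[of 1] by simp

lemma kpow_sum_cluster:
  "cl i = cl j \<Longrightarrow> (\<Sum>l\<in>UNIV. kpow P m i l * g l) = (\<Sum>l\<in>{l. cl l = cl j}. kpow P m i l * g l)"
  by (rule sum.mono_neutral_right) (auto simp: kpow_cross_zero)

lemma kpow_row_sum_cluster: "cl i = cl j \<Longrightarrow> (\<Sum>l\<in>{l. cl l = cl j}. kpow P m i l) = 1"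
  using kpow_sum_cluster[of i j m "\<lambda>_. 1"] kpow_row_sum[of m i] by simp

definition min_entry :: real where
  "min_entry = Min ((\<lambda>(i, j). P i j) ` {(i, j). 0 < P i j})"

lemma min_entry_pos: "0 < min_entry"
  and min_entry_le: "0 < P i j \<Longrightarrow> min_entry \<le> P i j"
proof -
  have fin: "finite ((\<lambda>(i, j). P i j) ` {(i, j). 0 < P i j})"
    by simp
  have ne: "(\<lambda>(i, j). P i j) ` {(i, j). 0 < P i j} \<noteq> {}"
    using diag_pos by auto
  show "0 < min_entry" unfolding min_entry_def using fin ne by (subst Min_gr_iff) auto
  show "0 < P i j \<Longrightarrow> min_entry \<le> P i j" unfolding min_entry_def using fin by (intro Min_le) auto
qed

lemma min_entry_le_1: "min_entry \<le> 1"
  using min_entry_le[OF diag_pos] le_1 order_trans by blast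

lemma kpow_ge_path: "(j, i) \<in> {(j, i). 0 < P i j} ^^ l \<Longrightarrow> min_entry ^ l \<le> kpow P l i j"
proof (induction l arbitrary: i)
  case (Suc l)
  then obtain r where r: "(j, r) \<in> {(j, i). 0 < P i j} ^^ l" "0 < P i r"
    by auto
  have "min_entry ^ Suc l \<le> P i r * kpow P l r j"
    using Suc.IH[OF r(1)] min_entry_le[OF r(2)] min_entry_pos by (simp add: mult_mono)
  also have "\<dots> \<le> kpow P (Suc l) i j"
    using member_le_sum[of r UNIV "\<lambda>l'. P i l' * kpow P l l' j"]
    by (simp add: mult_nonneg_nonneg nonneg kpow_nonneg)
  finally show ?case .
qed simp

text \<open>The positive diagonal (aperiodicity) lets a lower bound survive padding to longer paths.\<close>
lemma kpow_lower_bound_mono: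
  "l \<le> m \<Longrightarrow> min_entry ^ l \<le> kpow P l i j \<Longrightarrow> min_entry ^ m \<le> kpow P m i j"
proof (induction m rule: dec_induct)
  case (step m)
  then have "min_entry * min_entry ^ m \<le> P i i * kpow P m i j"
    using min_entry_le[OF diag_pos] min_entry_pos by (intro mult_mono) (auto simp: nonneg)
  also have "\<dots> \<le> kpow P (Suc m) i j"
    using member_le_sum[of i UNIV "\<lambda>l. P i l * kpow P m l j"]
    by (simp add: mult_nonneg_nonneg nonneg kpow_nonneg)
  finally show ?case by simp
qed

lemma kpow_uniformly_positive: "\<exists>m\<ge>1. \<forall>i j. cl i = cl j \<longrightarrow> min_entry ^ m \<le> kpow P m i j"
proof -
  define E where "E = {(j, i). 0 < P i j}"
  have "\<forall>ij. \<exists>l. cl (fst ij) = cl (snd ij) \<longrightarrow> (snd ij, fst ij) \<in> E ^^ l"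
    using connected by (auto simp: E_def rtrancl_power)
  then obtain len where len: "\<And>i j. cl i = cl j \<Longrightarrow> (j, i) \<in> E ^^ len (i, j)"
    by (metis fst_conv snd_conv)
  define m where "m = Max (insert 1 (range len))"
  have "min_entry ^ m \<le> kpow P m i j" if "cl i = cl j" for i j
  proof (rule kpow_lower_bound_mono)
    show "len (i, j) \<le> m" unfolding m_def by (intro Max_ge) auto
    show "min_entry ^ len (i, j) \<le> kpow P (len (i, j)) i j"
      using kpow_ge_path len[OF that] unfolding E_def by blast
  qed
  moreover have "m \<ge> 1" unfolding m_def by simp
  ultimately show ?thesis by blast
qed

definition col_max :: "'a \<Rightarrow> nat \<Rightarrow> real" where
  "col_max j k = Max ((\<lambda>i. kpow P k i j) ` {i. cl i = cl j})"

definition col_min :: "'a \<Rightarrow> nat \<Rightarrow> real" where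
  "col_min j k = Min ((\<lambda>i. kpow P k i j) ` {i. cl i = cl j})"

lemma col_max_ge: "cl i = cl j \<Longrightarrow> kpow P k i j \<le> col_max j k"
  unfolding col_max_def by (rule Max_ge) auto

lemma col_min_le: "cl i = cl j \<Longrightarrow> col_min j k \<le> kpow P k i j"
  unfolding col_min_def by (rule Min_le) auto

lemma col_max_attained: "\<exists>i. cl i = cl j \<and> kpow P k i j = col_max j k"
proof -
  have "col_max j k \<in> (\<lambda>i. kpow P k i j) ` {i. cl i = cl j}"
    unfolding col_max_def by (rule Max_in) auto
  then show ?thesis by auto
qed

lemma col_min_attained: "\<exists>i. cl i = cl j \<and> kpow P k i j = col_min j k"
proof -
  have "col_min j k \<in> (\<lambda>i. kpow P k i j) ` {i. cl i = cl j}"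
    unfolding col_min_def by (rule Min_in) auto
  then show ?thesis by auto
qed

lemma col_min_le_max: "col_min j k \<le> col_max j k"
  using col_min_le[of j j k] col_max_ge[of j j k] by simp

lemma kpow_Suc_between:
  assumes "cl i = cl j"
  shows "col_min j k \<le> kpow P (Suc k) i j" "kpow P (Suc k) i j \<le> col_max j k"
proof -
  have row: "(\<Sum>l\<in>{l. cl l = cl j}. P i l) = 1" and
    e: "kpow P (Suc k) i j = (\<Sum>l\<in>{l. cl l = cl j}. P i l * kpow P k l j)"
    using kpow_row_sum_cluster[OF assms, of 1] kpow_sum_cluster[OF assms, of 1 "\<lambda>l. kpow P k l j"]
    by simp_all
  have "(\<Sum>l\<in>{l. cl l = cl j}. P i l * col_min j k) \<le> (\<Sum>l\<in>{l. cl l = cl j}. P i l * kpow P k l j)"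
    by (rule sum_mono) (auto intro: mult_left_mono col_min_le nonneg)
  then show "col_min j k \<le> kpow P (Suc k) i j"
    using e row by (simp add: sum_distrib_right[symmetric])
  have "(\<Sum>l\<in>{l. cl l = cl j}. P i l * kpow P k l j) \<le> (\<Sum>l\<in>{l. cl l = cl j}. P i l * col_max j k)"
    by (rule sum_mono) (auto intro: mult_left_mono col_max_ge nonneg)
  then show "kpow P (Suc k) i j \<le> col_max j k"
    using e row by (simp add: sum_distrib_right[symmetric])
qed

lemma col_max_antimono: "k \<le> k' \<Longrightarrow> col_max j k' \<le> col_max j k"
proof (induction k' rule: dec_induct)
  case (step k')
  then show ?case using col_max_attained[of j "Suc k'"] kpow_Suc_between(2) by (metis order_trans)
qed simp

lemma col_min_mono: "k \<le> k' \<Longrightarrow> col_min j k \<le> col_min j k'"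
proof (induction k' rule: dec_induct)
  case (step k')
  then show ?case using col_min_attained[of j "Suc k'"] kpow_Suc_between(1) by (metis order_trans)
qed simp

context
  fixes m :: nat
  assumes uniform: "\<forall>i j. cl i = cl j \<longrightarrow> min_entry ^ m \<le> kpow P m i j"
begin

lemma col_width_step:
  "col_max j (m + k) - col_min j (m + k) \<le> (1 - min_entry ^ m) * (col_max j k - col_min j k)"
proof -
  obtain i where i: "cl i = cl j" "kpow P (m + k) i j = col_max j (m + k)"
    using col_max_attained by blast
  obtain i' where i': "cl i' = cl j" "kpow P (m + k) i' j = col_min j (m + k)"
    using col_min_attained by blast
  have split: "kpow P (m + k) r j = (\<Sum>l\<in>{l. cl l = cl j}. kpow P m r l * kpow P k l j)"
    if "cl r = cl j" for r
    using kpow_add[of P m k r j] kpow_sum_cluster[OF that] by simp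
  show ?thesis
    unfolding i(2)[symmetric] i'(2)[symmetric] split[OF i(1)] split[OF i'(1)]
  proof (rule weighted_average_diff_le)
    show "(\<Sum>l\<in>{l. cl l = cl j}. kpow P m i l) = 1" "(\<Sum>l\<in>{l. cl l = cl j}. kpow P m i' l) = 1"
      using kpow_row_sum_cluster i(1) i'(1) by auto
    show "min_entry ^ m \<le> kpow P m i l" "min_entry ^ m \<le> kpow P m i' l" if "l \<in> {l. cl l = cl j}" for l
      using uniform that i(1) i'(1) by auto
  qed (use min_entry_pos in \<open>auto intro: col_min_le col_max_ge\<close>)
qed

lemma col_width_le: "col_max j k - col_min j k \<le> (1 - min_entry ^ m) ^ (k div m)"
proof -
  have contract: "0 \<le> 1 - min_entry ^ m"
    using min_entry_pos min_entry_le_1 by (simp add: power_le_one)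
  have "col_max j (q * m) - col_min j (q * m) \<le> (1 - min_entry ^ m) ^ q" for q
  proof (induction q)
    case 0
    have "col_max j 0 \<le> 1" "0 \<le> col_min j 0"
      using col_max_attained[of j 0] col_min_attained[of j 0] kpow_le_1 kpow_nonneg by metis+
    then show ?case by simp
  next
    case (Suc q)
    have "col_max j (Suc q * m) - col_min j (Suc q * m)
        \<le> (1 - min_entry ^ m) * (col_max j (q * m) - col_min j (q * m))"
      using col_width_step[of j "q * m"] by (simp add: add.commute)
    also have "\<dots> \<le> (1 - min_entry ^ m) ^ Suc q"
      using Suc contract by (simp add: mult_left_mono)
    finally show ?case .
  qed
  moreover have "col_max j k - col_min j k \<le> col_max j (k div m * m) - col_min j (k div m * m)"
    using col_max_antimono[of "k div m * m" k j] col_min_mono[of "k div m * m" k j]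
    by (simp add: div_times_less_eq_dividend)
  ultimately show ?thesis by (meson order_trans)
qed

end

definition col_limit :: "'a \<Rightarrow> real" where
  "col_limit j = Inf (range (col_max j))"

lemma col_limit_between: "col_min j k \<le> col_limit j" "col_limit j \<le> col_max j k"
proof -
  have bdd: "bdd_below (range (col_max j))"
    using kpow_nonneg col_max_ge[of j j] by (intro bdd_belowI[of _ 0]) (metis order_trans rangeE)
  show "col_limit j \<le> col_max j k"
    unfolding col_limit_def by (rule cInf_lower) (use bdd in auto)
  show "col_min j k \<le> col_limit j"
    unfolding col_limit_def
  proof (rule cInf_greatest)
    fix x assume "x \<in> range (col_max j)"
    then obtain k' where "x = col_max j k'" by auto
    then show "col_min j k \<le> x"
      using col_min_mono[of k "max k k'" j] col_min_le_max[of j "max k k'"]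
        col_max_antimono[of k' "max k k'" j] by simp
  qed simp
qed

lemma kpow_tendsto_col_limit:
  assumes "cl i = cl j"
  shows "(\<lambda>k. kpow P k i j) \<longlonglongrightarrow> col_limit j"
proof -
  obtain m where m: "m \<ge> 1" and uniform: "\<forall>i j. cl i = cl j \<longrightarrow> min_entry ^ m \<le> kpow P m i j"
    using kpow_uniformly_positive by blast
  define \<gamma> where "\<gamma> = 1 - min_entry ^ m"
  have bound: "norm (kpow P k i j - col_limit j) \<le> \<gamma> ^ (k div m)" for k
  proof -
    have "col_max j k - col_min j k \<le> \<gamma> ^ (k div m)"
      unfolding \<gamma>_def by (rule col_width_le[OF uniform])
    then show ?thesis
      using col_max_ge[OF assms, of k] col_min_le[OF assms, of k] col_limit_between[of j k]
      unfolding real_norm_def abs_le_iff by (intro conjI; linarith)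
  qed
  have "norm \<gamma> < 1"
    using min_entry_pos min_entry_le_1 by (simp add: \<gamma>_def power_le_one)
  then have "(\<lambda>k. \<gamma> ^ (k div m)) \<longlonglongrightarrow> 0"
    using filterlim_compose[OF LIMSEQ_power_zero filterlim_at_top_div_const_nat, of \<gamma> m] m by simp
  then have "(\<lambda>k. kpow P k i j - col_limit j) \<longlonglongrightarrow> 0"
    by (rule Lim_null_comparison[rotated]) (intro always_eventually allI bound)
  then show ?thesis by (rule LIM_zero_cancel)
qed

lemma col_limit_pos: "0 < col_limit j"
proof -
  obtain m where "\<forall>i j. cl i = cl j \<longrightarrow> min_entry ^ m \<le> kpow P m i j"
    using kpow_uniformly_positive by blast
  then have "min_entry ^ m \<le> col_min j m"
    using col_min_attained[of j m] by metis
  then show ?thesis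
    using min_entry_pos col_limit_between(1)[of j m] by (meson order_less_le_trans zero_less_power)
qed

lemma kpow_tendsto:
  "(\<lambda>k. kpow P k i j) \<longlonglongrightarrow> (if cl i = cl j then col_limit j else 0)"
  using kpow_tendsto_col_limit[of i j] kpow_cross_zero[of i j] by auto

lemma col_limit_cluster_sum: "(\<Sum>j\<in>{j. cl j = cl i}. col_limit j) = 1"
proof -
  have "(\<lambda>k. \<Sum>j\<in>{j. cl j = cl i}. kpow P k i j) \<longlonglongrightarrow> (\<Sum>j\<in>{j. cl j = cl i}. col_limit j)"
    by (rule tendsto_sum) (auto intro: kpow_tendsto_col_limit)
  moreover have "(\<lambda>k. \<Sum>j\<in>{j. cl j = cl i}. kpow P k i j) = (\<lambda>k. 1)"
    using kpow_row_sum_cluster[of i i] by simp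
  ultimately show ?thesis by (simp add: LIMSEQ_const_iff)
qed

lemma col_limit_stationary: "(\<Sum>l\<in>UNIV. col_limit l * P l j) = col_limit j"
proof -
  have "(\<lambda>k. \<Sum>l\<in>UNIV. kpow P k j l * P l j)
      \<longlonglongrightarrow> (\<Sum>l\<in>UNIV. (if cl j = cl l then col_limit l else 0) * P l j)"
    by (rule tendsto_sum) (rule tendsto_mult_right[OF kpow_tendsto])
  moreover have "(\<lambda>k. \<Sum>l\<in>UNIV. kpow P k j l * P l j) \<longlonglongrightarrow> col_limit j"
    using LIMSEQ_Suc[OF kpow_tendsto_col_limit[of j j]] by (simp only: kpow_Suc_right)
  moreover have "(if cl j = cl l then col_limit l else 0) * P l j = col_limit l * P l j" for l
    using cross_zero[of l j] by auto
  ultimately show ?thesis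
    using LIMSEQ_unique by auto
qed

text \<open>The limit of the powers of the transpose of \<open>P\<close>: on each cluster the rank-one matrix
  \<open>col_limit 1\<^sup>T\<close>.\<close>
definition cluster_proj :: "'a \<Rightarrow> 'a \<Rightarrow> real" where
  "cluster_proj a b = (if cl a = cl b then col_limit a else 0)"

lemma sum_cluster_proj_mult: "(\<Sum>l\<in>UNIV. cluster_proj i l * g l) = col_limit i * (\<Sum>l\<in>{l. cl l = cl i}. g l)"
proof -
  have "(\<Sum>l\<in>UNIV. cluster_proj i l * g l) = (\<Sum>l\<in>UNIV. if cl l = cl i then col_limit i * g l else 0)"
    by (rule sum.cong) (auto simp: cluster_proj_def)
  then show ?thesis
    by (simp add: sum.inter_filter[symmetric] sum_distrib_left)
qed

lemma transpose_mult_cluster_proj: "(\<Sum>l\<in>UNIV. P l i * cluster_proj l j) = cluster_proj i j"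
proof -
  have "(\<Sum>l\<in>UNIV. P l i * cluster_proj l j) = (\<Sum>l\<in>UNIV. if cl i = cl j then col_limit l * P l i else 0)"
    by (rule sum.cong) (use cross_zero in \<open>auto simp: cluster_proj_def\<close>)
  also have "\<dots> = cluster_proj i j"
    using col_limit_stationary[of i] by (simp add: cluster_proj_def)
  finally show ?thesis .
qed

lemma cluster_proj_mult_transpose: "(\<Sum>l\<in>UNIV. cluster_proj i l * P j l) = cluster_proj i j"
proof -
  have "(\<Sum>l\<in>{l. cl l = cl i}. P j l) = (if cl i = cl j then 1 else 0)"
  proof (cases "cl j = cl i")
    case True
    then show ?thesis using kpow_row_sum_cluster[OF True, of 1] by simp
  next
    case False
    then have "(\<Sum>l\<in>{l. cl l = cl i}. P j l) = 0"
      by (intro sum.neutral) (use cross_zero in auto)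
    with False show ?thesis by auto
  qed
  then show ?thesis
    unfolding sum_cluster_proj_mult by (simp add: cluster_proj_def)
qed

lemma cluster_proj_idem: "(\<Sum>l\<in>UNIV. cluster_proj i l * cluster_proj l j) = cluster_proj i j"
proof -
  have "(\<Sum>l\<in>{l. cl l = cl i}. cluster_proj l j)
      = (\<Sum>l\<in>{l. cl l = cl i}. if cl i = cl j then col_limit l else 0)"
    by (rule sum.cong) (auto simp: cluster_proj_def)
  also have "\<dots> = (if cl i = cl j then 1 else 0)"
    using col_limit_cluster_sum[of i] col_limit_cluster_sum[of j] by simp
  finally have "(\<Sum>l\<in>{l. cl l = cl i}. cluster_proj l j) = (if cl i = cl j then 1 else 0)" .
  then show ?thesis
    unfolding sum_cluster_proj_mult by (simp add: cluster_proj_def)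
qed

lemma kpow_transpose_tendsto_cluster_proj: "(\<lambda>k. kpow (\<lambda>i j. P j i) k a b) \<longlonglongrightarrow> cluster_proj a b"
proof -
  have "(\<lambda>k. kpow (\<lambda>i j. P j i) k a b) = (\<lambda>k. kpow P k b a)"
    by (rule ext) (rule kpow_transpose)
  then show ?thesis
    using kpow_tendsto[of b a] unfolding cluster_proj_def by (simp only: eq_commute)
qed

end

section \<open>Contracting norms\<close>

lemma bounded_linear_funpow:
  fixes f :: "'a::real_normed_vector \<Rightarrow> 'a"
  shows "bounded_linear f \<Longrightarrow> bounded_linear (f ^^ k)"
  by (induction k) (simp_all add: id_def comp_def bounded_linear_ident bounded_linear_compose)

definition contracting_norm :: "('v::real_normed_vector \<Rightarrow> 'v) \<Rightarrow> ('v \<Rightarrow> real) \<Rightarrow> real \<Rightarrow> real \<Rightarrow> bool" where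
  "contracting_norm B nr c \<sigma> \<longleftrightarrow>
     (\<forall>z. norm z \<le> nr z) \<and> (\<forall>z. nr z \<le> c * norm z) \<and> 0 \<le> \<sigma> \<and> \<sigma> < 1 \<and>
     (\<forall>z. nr (B z) \<le> \<sigma> * nr z) \<and> (\<forall>z w. nr (z + w) \<le> nr z + nr w) \<and>
     (\<forall>z t. nr (t *\<^sub>R z) = \<bar>t\<bar> * nr z)"

text \<open>The norm \<open>\<Sum>k<K. \<parallel>B\<^sup>k z\<parallel>\<close> loses at least \<open>\<parallel>z\<parallel>/2\<close> under \<open>B\<close>, which is a fixed
  fraction of itself.\<close>
lemma contracting_norm_exists:
  assumes B: "bounded_linear B" and K: "0 < K"
    and half: "\<And>z. norm ((B ^^ K) z) \<le> norm z / 2"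
  shows "\<exists>nr c \<sigma>. contracting_norm B nr c \<sigma>"
proof -
  have lin: "bounded_linear (B ^^ k)" for k
    using B by (rule bounded_linear_funpow)
  define nr where "nr z = (\<Sum>k<K. norm ((B ^^ k) z))" for z
  define c where "c = 1 + (\<Sum>k<K. onorm (B ^^ k))"
  define \<sigma> where "\<sigma> = 1 - 1 / (2 * c)"
  have c: "1 \<le> c"
    unfolding c_def by (simp add: sum_nonneg onorm_pos_le lin)
  have lower: "norm z \<le> nr z" for z
    using member_le_sum[of 0 "{..<K}" "\<lambda>k. norm ((B ^^ k) z)"] K by (simp add: nr_def)
  have upper: "nr z \<le> c * norm z" for z
  proof -
    have "nr z \<le> (\<Sum>k<K. onorm (B ^^ k) * norm z)"
      unfolding nr_def by (intro sum_mono onorm lin)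
    also have "\<dots> \<le> c * norm z"
      by (simp add: c_def sum_distrib_right[symmetric] distrib_right)
    finally show ?thesis .
  qed
  have contract: "nr (B z) \<le> \<sigma> * nr z" for z
  proof -
    have "nr (B z) + norm z = nr z + norm ((B ^^ K) z)"
      using sum.lessThan_Suc_shift[of "\<lambda>k. norm ((B ^^ k) z)" K]
      by (simp add: nr_def funpow_Suc_right del: funpow.simps)
    moreover have "nr z / (2 * c) \<le> norm z / 2"
      using upper[of z] c by (simp add: field_simps)
    ultimately show ?thesis
      using half[of z] by (simp add: \<sigma>_def algebra_simps)
  qed
  have triangle: "nr (z + w) \<le> nr z + nr w" for z w
    unfolding nr_def sum.distrib[symmetric]
    by (intro sum_mono) (simp add: linear_add[OF bounded_linear.linear[OF lin]] norm_triangle_ineq)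
  have homogeneous: "nr (t *\<^sub>R z) = \<bar>t\<bar> * nr z" for t z
    by (simp add: nr_def linear_scale[OF bounded_linear.linear[OF lin]] sum_distrib_left)
  have "0 \<le> \<sigma>" "\<sigma> < 1"
    using c by (auto simp: \<sigma>_def field_simps)
  then show ?thesis
    unfolding contracting_norm_def using lower upper contract triangle homogeneous by blast
qed

definition kact :: "('a::finite \<Rightarrow> 'a \<Rightarrow> real) \<Rightarrow> ('b::real_normed_vector)^'a \<Rightarrow> 'b^'a" where
  "kact M z = (\<chi> a. \<Sum>b\<in>UNIV. M a b *\<^sub>R z $ b)"

lemma kact_nth [simp]: "kact M z $ a = (\<Sum>b\<in>UNIV. M a b *\<^sub>R z $ b)"
  by (simp add: kact_def)

lemma kact_add: "kact M (z + w) = kact M z + kact M w"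
  by (simp add: vec_eq_iff scaleR_add_right sum.distrib)

lemma kact_diff: "kact M (z - w) = kact M z - kact M w"
  by (simp add: vec_eq_iff scaleR_diff_right sum_subtractf)

lemma kact_scaleR: "kact M (t *\<^sub>R z) = t *\<^sub>R kact M z"
  by (simp add: vec_eq_iff scaleR_sum_right mult.commute)

lemma kact_kernel_diff: "kact (\<lambda>a b. M a b - N a b) z = kact M z - kact N z"
  by (simp add: vec_eq_iff scaleR_diff_left sum_subtractf)

lemma kact_kact: "kact M (kact N z) = kact (\<lambda>a c. \<Sum>b\<in>UNIV. M a b * N b c) z"
proof -
  have "(\<Sum>b\<in>UNIV. M a b *\<^sub>R (\<Sum>c\<in>UNIV. N b c *\<^sub>R z $ c))
      = (\<Sum>c\<in>UNIV. (\<Sum>b\<in>UNIV. M a b * N b c) *\<^sub>R z $ c)" for a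
    unfolding scaleR_sum_right scaleR_sum_left scaleR_scaleR by (rule sum.swap)
  then show ?thesis by (simp add: vec_eq_iff)
qed

lemma kact_kpow: "(kact M ^^ k) z = kact (kpow M k) z"
proof (induction k)
  case 0
  have "(\<Sum>b\<in>UNIV. of_bool (a = b) *\<^sub>R z $ b) = z $ a" for a
    by (simp add: if_distrib[of "\<lambda>t. t *\<^sub>R _"] of_bool_def cong: if_cong)
  then show ?case by (simp add: vec_eq_iff)
next
  case (Suc k)
  then show ?case by (simp add: kact_kact)
qed

lemma norm_kact_le:
  fixes M :: "'a::finite \<Rightarrow> 'a \<Rightarrow> real"
  assumes "\<And>a b. \<bar>M a b\<bar> \<le> m"
  shows "norm (kact M z) \<le> real CARD('a::finite) * real CARD('a) * m * norm z"
proof -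
  have entry: "norm (kact M z $ a) \<le> real CARD('a) * m * norm z" for a
  proof -
    have "norm (kact M z $ a) \<le> (\<Sum>b\<in>UNIV. \<bar>M a b\<bar> * norm (z $ b))"
      unfolding kact_nth by (rule order_trans[OF norm_sum]) simp
    also have "\<dots> \<le> (\<Sum>b\<in>(UNIV::'a set). m * norm z)"
    proof (rule sum_mono)
      fix b
      show "\<bar>M a b\<bar> * norm (z $ b) \<le> m * norm z"
        using assms[of a b] Finite_Cartesian_Product.norm_nth_le[of z b]
          order_trans[OF abs_ge_zero assms[of a b]]
        by (intro mult_mono) auto
    qed
    finally show ?thesis by simp
  qed
  have "norm (kact M z) \<le> (\<Sum>a\<in>UNIV. norm (kact M z $ a))"
    unfolding norm_vec_def by (rule L2_set_le_sum) simp
  also have "\<dots> \<le> (\<Sum>a\<in>(UNIV::'a set). real CARD('a) * m * norm z)"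
    by (intro sum_mono entry)
  finally show ?thesis by simp
qed

lemma bounded_linear_kact:
  fixes M :: "'a::finite \<Rightarrow> 'a \<Rightarrow> real"
  shows "bounded_linear (kact M)"
proof (rule bounded_linear_intro)
  define m where "m = (\<Sum>a\<in>UNIV. \<Sum>b\<in>UNIV. \<bar>M a b\<bar>)"
  have "\<bar>M a b\<bar> \<le> m" for a b
    using member_le_sum[of b UNIV "\<lambda>b. \<bar>M a b\<bar>"] member_le_sum[of a UNIV "\<lambda>a. \<Sum>b\<in>UNIV. \<bar>M a b\<bar>"]
    by (simp add: m_def sum_nonneg)
  then show "norm (kact M z) \<le> norm z * (real CARD('a) * real CARD('a) * m)" for z
    using norm_kact_le[of M m z] by (simp add: ac_simps)
qed (simp_all add: kact_add kact_scaleR)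

lemma contracting_norm_kact:
  fixes M :: "'a::finite \<Rightarrow> 'a \<Rightarrow> real"
  assumes "\<And>a b. (\<lambda>k. kpow M k a b) \<longlonglongrightarrow> 0"
  shows "\<exists>nr c \<sigma>. contracting_norm (kact M :: ('b::real_normed_vector)^'a \<Rightarrow> _) nr c \<sigma>"
proof -
  define \<epsilon> where "\<epsilon> = 1 / (2 * real CARD('a) * real CARD('a))"
  have "0 < \<epsilon>"
    by (simp add: \<epsilon>_def)
  then have "\<forall>\<^sub>F k in sequentially. \<bar>kpow M k a b\<bar> < \<epsilon>" for a b
    using order_tendstoD(2)[OF tendsto_rabs_zero[OF assms]] by blast
  then have "\<forall>\<^sub>F k in sequentially. \<forall>a b. \<bar>kpow M k a b\<bar> < \<epsilon>"
    by (simp add: eventually_all_finite)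
  then obtain K where "\<forall>k\<ge>K. \<forall>a b. \<bar>kpow M k a b\<bar> < \<epsilon>"
    unfolding eventually_sequentially by blast
  then have K: "\<bar>kpow M (Suc K) a b\<bar> \<le> \<epsilon>" for a b
    by (meson le_SucI less_imp_le order_refl)
  show ?thesis
  proof (rule contracting_norm_exists[OF bounded_linear_kact zero_less_Suc])
    show "norm ((kact M ^^ Suc K) z) \<le> norm z / 2" for z :: "'b^'a"
      using norm_kact_le[of "kpow M (Suc K)" \<epsilon> z, OF K] unfolding kact_kpow by (simp add: \<epsilon>_def)
  qed
qed

section \<open>The mixing matrices\<close>

lemma A2_block_stochastic: "A2 R \<Longrightarrow> block_stochastic (\<lambda>_. ()) (\<lambda>i j. R $ i $ j)"
  unfolding A2_def strongly_connected_on_def by unfold_locales auto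

lemma A1_block_stochastic:
  assumes "A1 cl C"
  shows "block_stochastic cl (\<lambda>i j. C $ j $ i)"
proof unfold_locales
  fix i j
  have cross: "cl i \<noteq> cl j \<Longrightarrow> C $ i $ j = 0" for i j
    using assms by (auto simp: A1_def)
  show "cl i \<noteq> cl j \<Longrightarrow> C $ j $ i = 0" "0 \<le> C $ j $ i" "0 < C $ i $ i"
    using assms cross[of j i] by (auto simp: A1_def)
  have "(\<Sum>j\<in>UNIV. C $ j $ i) = (\<Sum>j\<in>{j. cl j = cl i}. C $ j $ i)"
    by (rule sum.mono_neutral_right) (auto simp: cross)
  then show "(\<Sum>j\<in>UNIV. C $ j $ i) = 1"
    using assms by (simp add: A1_def)
  assume "cl i = cl j"
  then have "(i, j) \<in> {(j, i). 0 < C $ i $ j}\<^sup>*"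
    using assms unfolding A1_def strongly_connected_on_def by auto
  then have "(j, i) \<in> ({(j, i). 0 < C $ i $ j}\<inverse>)\<^sup>*"
    by (rule rtrancl_converseI)
  moreover have "{(j, i). 0 < C $ i $ j}\<inverse> = {(j, i). 0 < C $ j $ i}"
    by auto
  ultimately show "(j, i) \<in> {(j, i). 0 < C $ j $ i}\<^sup>*"
    by simp
qed

lemma A2_consensus:
  assumes "A2 R"
  obtains u where "\<And>j. 0 < u j" "(\<Sum>j\<in>UNIV. u j) = 1" "\<And>j. (\<Sum>l\<in>UNIV. u l * R $ l $ j) = u j"
    and "\<exists>nr c \<sigma>. contracting_norm (kact (\<lambda>a b. R $ a $ b - u b) :: ('b::real_normed_vector)^'a \<Rightarrow> _) nr c \<sigma>"
proof -
  interpret block_stochastic "\<lambda>_. ()" "\<lambda>i j. R $ i $ j"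
    using assms by (rule A2_block_stochastic)
  define u where "u = col_limit"
  have sum: "(\<Sum>j\<in>UNIV. u j) = 1"
    using col_limit_cluster_sum by (simp add: u_def)
  have "(\<lambda>k. kpow (\<lambda>a b. R $ a $ b - u b) (Suc k) a b) \<longlonglongrightarrow> 0" for a b
  proof (subst kpow_diff_absorbing)
    show "(\<Sum>l\<in>UNIV. R $ i $ l * u j) = u j" "(\<Sum>l\<in>UNIV. u l * u j) = u j" for i j
      using row_sum sum by (simp_all add: sum_distrib_right[symmetric])
    show "(\<Sum>l\<in>UNIV. u l * R $ l $ j) = u j" for j
      using col_limit_stationary by (simp add: u_def)
    show "(\<lambda>k. kpow (\<lambda>i j. R $ i $ j) (Suc k) a b - u b) \<longlonglongrightarrow> 0"
      using LIMSEQ_Suc[OF kpow_tendsto[of a b]] by (simp add: u_def LIM_zero)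
  qed
  then have "\<exists>nr c \<sigma>.
      contracting_norm (kact (\<lambda>a b. R $ a $ b - u b) :: ('b::real_normed_vector)^'a \<Rightarrow> _) nr c \<sigma>"
    by (rule contracting_norm_kact[OF LIMSEQ_imp_Suc])
  then show thesis
    using that[of u] col_limit_pos sum col_limit_stationary by (simp add: u_def)
qed

lemma A1_tracking:
  assumes "A1 cl C"
  obtains v where "\<And>j. 0 < v j" "\<And>i. (\<Sum>j\<in>{j. cl j = cl i}. v j) = 1"
    and "\<And>j. (\<Sum>l\<in>UNIV. v l * C $ j $ l) = v j"
    and "\<exists>nr c \<sigma>. contracting_norm
          (kact (\<lambda>a b. C $ a $ b - (if cl a = cl b then v a else 0)) :: ('b::real_normed_vector)^'a \<Rightarrow> _) nr c \<sigma>"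
proof -
  interpret block_stochastic cl "\<lambda>i j. C $ j $ i"
    using assms by (rule A1_block_stochastic)
  have "(\<lambda>k. kpow (\<lambda>a b. C $ a $ b - cluster_proj a b) (Suc k) a b) \<longlonglongrightarrow> 0" for a b
    using LIMSEQ_Suc[OF kpow_transpose_tendsto_cluster_proj[of a b]]
    by (subst kpow_diff_absorbing)
      (simp_all add: transpose_mult_cluster_proj cluster_proj_mult_transpose cluster_proj_idem LIM_zero)
  then have "\<exists>nr c \<sigma>. contracting_norm
      (kact (\<lambda>a b. C $ a $ b - cluster_proj a b) :: ('b::real_normed_vector)^'a \<Rightarrow> _) nr c \<sigma>"
    by (rule contracting_norm_kact[OF LIMSEQ_imp_Suc])
  then show thesis
    using that[of col_limit] col_limit_pos col_limit_cluster_sum col_limit_stationary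
    by (simp add: cluster_proj_def mult.commute)
qed

section \<open>Nash equilibria and the game map\<close>

lemma game_map_eq_sum_pgrad:
  fixes cl :: "'a::finite \<Rightarrow> 'h"
  shows "game_map blk cl grad x = (\<Sum>a\<in>UNIV. pgrad blk cl grad a x)"
proof -
  have "(\<Sum>a\<in>UNIV. pgrad blk cl grad a x) $ j = (\<Sum>a\<in>UNIV. if cl a = blk j then grad a x $ j else 0)" for j
    by (auto simp: pgrad_def intro: sum.cong)
  then show ?thesis
    by (simp add: vec_eq_iff game_map_def sum.inter_filter[symmetric])
qed

lemma cluster_pgrad_sum_nth:
  fixes cl :: "'a::finite \<Rightarrow> 'h"
  shows "(\<Sum>a\<in>{a. cl a = h}. pgrad blk cl grad a x) $ j = (if blk j = h then game_map blk cl grad x $ j else 0)"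
  by (auto simp: pgrad_def game_map_def intro: sum.cong)

lemma cluster_pgrad_sum_eq_0:
  fixes cl :: "'a::finite \<Rightarrow> 'h"
  assumes "game_map blk cl grad x = 0"
  shows "(\<Sum>a\<in>{a. cl a = h}. pgrad blk cl grad a x) = 0"
proof -
  have "(\<Sum>a\<in>{a. cl a = h}. pgrad blk cl grad a x) $ j = 0" for j
    using cluster_pgrad_sum_nth[where blk=blk and cl=cl and grad=grad and x=x and h=h and j=j] assms by simp
  then show ?thesis by (simp add: vec_eq_iff)
qed

lemma game_map_lipschitz:
  fixes cl :: "'a::finite \<Rightarrow> 'h"
  assumes "\<And>a x z. norm (pgrad blk cl grad a x - pgrad blk cl grad a z) \<le> L * norm (x - z)"
  shows "norm (game_map blk cl grad x - game_map blk cl grad z) \<le> real CARD('a) * L * norm (x - z)"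
proof -
  have "norm (game_map blk cl grad x - game_map blk cl grad z)
      \<le> (\<Sum>a\<in>UNIV. norm (pgrad blk cl grad a x - pgrad blk cl grad a z))"
    unfolding game_map_eq_sum_pgrad sum_subtractf[symmetric] by (rule norm_sum)
  also have "\<dots> \<le> (\<Sum>a\<in>(UNIV::'a set). L * norm (x - z))"
    by (intro sum_mono assms)
  finally show ?thesis by simp
qed

lemma inner_cluster_grad_sum:
  fixes cl :: "'a::finite \<Rightarrow> 'h" and d :: "real^'q::finite"
  assumes "\<And>j. blk j \<noteq> h \<Longrightarrow> d $ j = 0"
  shows "d \<bullet> (\<Sum>a\<in>{a. cl a = h}. grad a x) = d \<bullet> game_map blk cl grad x"
  unfolding inner_vec_def
proof (rule sum.cong)
  show "d $ j \<bullet> (\<Sum>a\<in>{a. cl a = h}. grad a x) $ j = d $ j \<bullet> game_map blk cl grad x $ j" for j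
    by (cases "blk j = h") (auto simp: game_map_def assms)
qed simp

lemma has_field_derivative_sum_along_line:
  assumes "\<And>a x. GDERIV (f a) x :> grad a x"
  shows "((\<lambda>t. \<Sum>a\<in>A. f a (x + t *\<^sub>R d)) has_field_derivative (d \<bullet> (\<Sum>a\<in>A. grad a (x + s *\<^sub>R d)))) (at s)"
proof -
  have "((\<lambda>t. f a (x + t *\<^sub>R d)) has_derivative (\<lambda>h. (h *\<^sub>R d) \<bullet> grad a (x + s *\<^sub>R d))) (at s)" for a
  proof (rule has_derivative_compose[of "\<lambda>t. x + t *\<^sub>R d"])
    show "((\<lambda>t. x + t *\<^sub>R d) has_derivative (\<lambda>h. h *\<^sub>R d)) (at s)"
      by (auto intro!: derivative_eq_intros)
    show "(f a has_derivative (\<lambda>h. h \<bullet> grad a (x + s *\<^sub>R d))) (at (x + s *\<^sub>R d))"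
      using assms by (simp add: gderiv_def)
  qed
  then have "((\<lambda>t. \<Sum>a\<in>A. f a (x + t *\<^sub>R d)) has_derivative (\<lambda>h. \<Sum>a\<in>A. (h *\<^sub>R d) \<bullet> grad a (x + s *\<^sub>R d))) (at s)"
    by (rule has_derivative_sum)
  moreover have "(\<lambda>h. \<Sum>a\<in>A. (h *\<^sub>R d) \<bullet> grad a (x + s *\<^sub>R d))
      = (\<lambda>h. (d \<bullet> (\<Sum>a\<in>A. grad a (x + s *\<^sub>R d))) * h)"
    by (simp add: fun_eq_iff inner_sum_right sum_distrib_left mult.commute)
  ultimately show ?thesis by (simp add: has_field_derivative_def)
qed

lemma convex_on_sum_along_line:
  assumes "\<And>a. convex_on UNIV (f a)"
  shows "convex_on UNIV (\<lambda>t::real. \<Sum>a\<in>A. f a (x + t *\<^sub>R d))"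
proof (rule convex_onI)
  fix t u v :: real
  assume t: "0 < t" "t < 1"
  have line: "x + ((1 - t) *\<^sub>R u + t *\<^sub>R v) *\<^sub>R d = (1 - t) *\<^sub>R (x + u *\<^sub>R d) + t *\<^sub>R (x + v *\<^sub>R d)"
    by (simp add: algebra_simps)
  have "(\<Sum>a\<in>A. f a (x + ((1 - t) *\<^sub>R u + t *\<^sub>R v) *\<^sub>R d))
      \<le> (\<Sum>a\<in>A. (1 - t) * f a (x + u *\<^sub>R d) + t * f a (x + v *\<^sub>R d))"
    unfolding line by (rule sum_mono) (rule convex_onD[OF assms]; use t in auto)
  then show "(\<Sum>a\<in>A. f a (x + ((1 - t) *\<^sub>R u + t *\<^sub>R v) *\<^sub>R d))
      \<le> (1 - t) * (\<Sum>a\<in>A. f a (x + u *\<^sub>R d)) + t * (\<Sum>a\<in>A. f a (x + v *\<^sub>R d))"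
    by (simp add: sum.distrib sum_distrib_left)
qed simp

text \<open>First-order optimality of cluster \<open>h\<close> along the direction given by block \<open>h\<close> of the game map.\<close>
lemma game_map_eq_0_if_is_NE:
  fixes cl :: "'a::finite \<Rightarrow> 'h" and blk :: "'q::finite \<Rightarrow> 'h"
  assumes grad: "\<And>a x. GDERIV (f a) x :> grad a x"
    and NE: "is_NE blk cl f x"
  shows "game_map blk cl grad x = 0"
proof (subst vec_eq_iff, intro allI)
  fix j
  define h where "h = blk j"
  define d where "d = (\<chi> i. if blk i = h then game_map blk cl grad x $ i else 0)"
  have supp: "\<And>i. blk i \<noteq> h \<Longrightarrow> d $ i = 0"
    by (simp add: d_def)
  define \<phi> where "\<phi> = (\<lambda>t. \<Sum>a\<in>{a. cl a = h}. f a (x + t *\<^sub>R d))"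
  have "upd_block blk h x (x + t *\<^sub>R d) = x + t *\<^sub>R d" for t
    by (auto simp: upd_block_def vec_eq_iff supp)
  then have min: "\<phi> 0 \<le> \<phi> t" for t
    using NE unfolding is_NE_def cluster_cost_def \<phi>_def by (metis add_0_right scale_zero_left)
  have "(\<phi> has_field_derivative (d \<bullet> (\<Sum>a\<in>{a. cl a = h}. grad a (x + 0 *\<^sub>R d)))) (at 0)"
    unfolding \<phi>_def by (rule has_field_derivative_sum_along_line[OF grad])
  then have "d \<bullet> (\<Sum>a\<in>{a. cl a = h}. grad a (x + 0 *\<^sub>R d)) = 0"
    by (rule DERIV_local_min[of _ _ 0 1]) (use min in auto)
  then have "d \<bullet> game_map blk cl grad x = 0"
    using inner_cluster_grad_sum[where cl=cl and grad=grad and x=x, OF supp] by simp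
  moreover have "d \<bullet> game_map blk cl grad x = d \<bullet> d"
    unfolding inner_vec_def by (rule sum.cong) (auto simp: d_def)
  ultimately have "d $ j = 0"
    by simp
  then show "game_map blk cl grad x $ j = 0 $ j"
    by (simp add: d_def h_def)
qed

lemma is_NE_if_game_map_eq_0:
  fixes cl :: "'a::finite \<Rightarrow> 'h" and blk :: "'q::finite \<Rightarrow> 'h"
  assumes grad: "\<And>a x. GDERIV (f a) x :> grad a x"
    and cvx: "\<And>a. convex_on UNIV (f a)"
    and zero: "game_map blk cl grad x = 0"
  shows "is_NE blk cl f x"
  unfolding is_NE_def
proof (intro allI)
  fix h z
  define d where "d = upd_block blk h x z - x"
  have supp: "\<And>i. blk i \<noteq> h \<Longrightarrow> d $ i = 0"
    by (simp add: d_def upd_block_def)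
  define \<phi> where "\<phi> = (\<lambda>t. \<Sum>a\<in>{a. cl a = h}. f a (x + t *\<^sub>R d))"
  have D: "(\<phi> has_field_derivative (d \<bullet> (\<Sum>a\<in>{a. cl a = h}. grad a (x + 0 *\<^sub>R d)))) (at 0)"
    unfolding \<phi>_def by (rule has_field_derivative_sum_along_line[OF grad])
  have "(d \<bullet> (\<Sum>a\<in>{a. cl a = h}. grad a (x + 0 *\<^sub>R d))) * (1 - 0) \<le> \<phi> 1 - \<phi> 0"
    by (rule convex_on_imp_above_tangent[OF _ _ _ _ D])
      (auto simp: \<phi>_def intro: convex_on_sum_along_line cvx)
  moreover have "d \<bullet> (\<Sum>a\<in>{a. cl a = h}. grad a (x + 0 *\<^sub>R d)) = 0"
    using inner_cluster_grad_sum[where cl=cl and grad=grad and x=x, OF supp] zero by simp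
  ultimately have "\<phi> 0 \<le> \<phi> 1"
    by simp
  then show "cluster_cost cl f h x \<le> cluster_cost cl f h (upd_block blk h x z)"
    by (simp add: \<phi>_def cluster_cost_def d_def)
qed

lemma power2_norm_diff_scaleR:
  fixes e D :: "'v::real_inner"
  shows "(norm (e - t *\<^sub>R D))\<^sup>2 = (norm e)\<^sup>2 - 2 * t * (D \<bullet> e) + t\<^sup>2 * (norm D)\<^sup>2"
proof -
  have "(norm (e - t *\<^sub>R D))\<^sup>2 = (e - t *\<^sub>R D) \<bullet> (e - t *\<^sub>R D)"
    by (simp add: power2_norm_eq_inner)
  also have "\<dots> = e \<bullet> e - 2 * t * (D \<bullet> e) + t\<^sup>2 * (D \<bullet> D)"
    by (simp add: inner_diff_left inner_diff_right inner_commute power2_eq_square algebra_simps)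
  finally show ?thesis by (simp add: power2_norm_eq_inner)
qed

text \<open>For small \<open>\<gamma>\<close>, \<open>x \<mapsto> x - \<gamma> M x\<close> is a contraction; its fixed point is a zero of \<open>M\<close>.\<close>
lemma strongly_monotone_zero_exists:
  fixes M :: "real^'q::finite \<Rightarrow> real^'q"
  assumes lip: "\<And>x z. norm (M x - M z) \<le> \<Lambda> * norm (x - z)" and \<Lambda>: "0 < \<Lambda>" and \<mu>: "0 < \<mu>"
    and smon: "\<And>x z. \<mu> * (norm (x - z))\<^sup>2 \<le> (M x - M z) \<bullet> (x - z)"
  shows "\<exists>x. M x = 0"
proof -
  define \<gamma> where "\<gamma> = \<mu> / \<Lambda>\<^sup>2"
  define T where "T x = x - \<gamma> *\<^sub>R M x" for x
  define q where "q = max 0 (1 - \<mu>\<^sup>2 / \<Lambda>\<^sup>2)"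
  have \<gamma>: "0 < \<gamma>" and q: "0 \<le> q" "q < 1"
    using \<Lambda> \<mu> by (auto simp: \<gamma>_def q_def)
  have "dist (T x) (T z) \<le> sqrt q * dist x z" for x z
  proof -
    define e where "e = x - z"
    define D where "D = M x - M z"
    have "(norm (e - \<gamma> *\<^sub>R D))\<^sup>2 = (norm e)\<^sup>2 - 2 * \<gamma> * (D \<bullet> e) + \<gamma>\<^sup>2 * (norm D)\<^sup>2"
      by (rule power2_norm_diff_scaleR)
    also have "\<dots> \<le> (norm e)\<^sup>2 - 2 * \<gamma> * (\<mu> * (norm e)\<^sup>2) + \<gamma>\<^sup>2 * (\<Lambda> * norm e)\<^sup>2"
      using smon[of x z] lip[of x z] \<gamma>
      by (intro add_mono diff_mono mult_left_mono power_mono) (auto simp: D_def e_def)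
    also have "\<dots> = (1 - \<mu>\<^sup>2 / \<Lambda>\<^sup>2) * (norm e)\<^sup>2"
      using \<Lambda> by (simp add: \<gamma>_def power2_eq_square field_simps)
    also have "\<dots> \<le> (sqrt q * norm e)\<^sup>2"
      using q by (simp add: power_mult_distrib q_def mult_right_mono)
    finally have "(norm (e - \<gamma> *\<^sub>R D))\<^sup>2 \<le> (sqrt q * norm e)\<^sup>2" .
    then have "norm (e - \<gamma> *\<^sub>R D) \<le> sqrt q * norm e"
      by (rule power2_le_imp_le) (use q in simp)
    moreover have "T x - T z = e - \<gamma> *\<^sub>R D"
      by (simp add: T_def e_def D_def algebra_simps)
    ultimately show ?thesis
      by (simp add: dist_norm e_def)
  qed
  then obtain x where "T x = x"
    using banach_fix_type[of "sqrt q" T] q by auto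
  then show ?thesis
    using \<gamma> by (auto simp: T_def)
qed

lemma strongly_monotone_zero_unique:
  fixes M :: "'v::real_inner \<Rightarrow> 'v"
  assumes \<mu>: "0 < \<mu>" and smon: "\<mu> * (norm (x - z))\<^sup>2 \<le> (M x - M z) \<bullet> (x - z)"
    and "M x = 0" "M z = 0"
  shows "x = z"
  using smon assms(3,4) \<mu> by (simp add: mult_le_0_iff)

lemma block_has_agent:
  fixes cl :: "'a::finite \<Rightarrow> 'h" and blk :: "'q::finite \<Rightarrow> 'h"
  assumes \<mu>: "0 < \<mu>"
    and smon: "\<And>x z. \<mu> * (norm (x - z))\<^sup>2 \<le> (game_map blk cl grad x - game_map blk cl grad z) \<bullet> (x - z)"
  shows "\<exists>a. cl a = blk j"
proof (rule ccontr)
  assume "\<not> (\<exists>a. cl a = blk j)"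
  then have "game_map blk cl grad x $ j = 0" for x
    by (simp add: game_map_def)
  then have "(game_map blk cl grad (axis j 1) - game_map blk cl grad 0) \<bullet> (axis j 1 - 0) = 0"
    by (simp add: inner_axis)
  then show False
    using smon[of "axis j 1" 0] \<mu> by simp
qed

section \<open>A small-gain lemma\<close>

lemma weighted_sum_contracts:
  fixes A B C A' B' C' p s \<rho> :: real
  assumes nonneg: "0 \<le> A" "0 \<le> B" "0 \<le> C" "0 \<le> p" "0 \<le> s"
    and A': "A' \<le> a1 * A + a2 * B + a3 * C"
    and B': "B' \<le> b1 * A + b2 * B + b3 * C"
    and C': "C' \<le> c1 * A + c2 * B + c3 * C"
    and col1: "a1 + p * b1 + s * c1 \<le> \<rho>"
    and col2: "a2 + p * b2 + s * c2 \<le> \<rho> * p"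
    and col3: "a3 + p * b3 + s * c3 \<le> \<rho> * s"
  shows "A' + p * B' + s * C' \<le> \<rho> * (A + p * B + s * C)"
proof -
  have "A' + p * B' + s * C'
      \<le> (a1 * A + a2 * B + a3 * C) + p * (b1 * A + b2 * B + b3 * C) + s * (c1 * A + c2 * B + c3 * C)"
    using A' B' C' nonneg by (intro add_mono mult_left_mono) auto
  also have "\<dots> = (a1 + p * b1 + s * c1) * A + (a2 + p * b2 + s * c2) * B + (a3 + p * b3 + s * c3) * C"
    by (simp add: algebra_simps)
  also have "\<dots> \<le> \<rho> * A + (\<rho> * p) * B + (\<rho> * s) * C"
    using col1 col2 col3 nonneg by (intro add_mono mult_right_mono) auto
  finally show ?thesis
    by (simp add: algebra_simps)
qed

lemma seq_le_geometric:
  fixes V :: "nat \<Rightarrow> real"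
  assumes "\<And>k. V (Suc k) \<le> \<rho> * V k" "0 \<le> \<rho>"
  shows "V k \<le> \<rho> ^ k * V 0"
proof (induction k)
  case (Suc k)
  have "V (Suc k) \<le> \<rho> * V k"
    by (rule assms(1))
  also have "\<dots> \<le> \<rho> * (\<rho> ^ k * V 0)"
    using Suc assms(2) by (rule mult_left_mono)
  finally show ?case
    by (simp add: mult.assoc)
qed simp

lemma LIMSEQ_if_geometric_bound:
  fixes f :: "nat \<Rightarrow> 'a::real_normed_vector"
  assumes "\<And>k. norm (f k - l) \<le> c * \<rho> ^ k" "0 < \<rho>" "\<rho> < 1"
  shows "f \<longlonglongrightarrow> l"
proof -
  have "(\<lambda>k. c * \<rho> ^ k) \<longlonglongrightarrow> c * 0"
    using assms(2,3) by (intro tendsto_mult_left LIMSEQ_power_zero) simp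
  then have "(\<lambda>k. c * \<rho> ^ k) \<longlonglongrightarrow> 0"
    by simp
  then have "(\<lambda>k. f k - l) \<longlonglongrightarrow> 0"
    by (rule Lim_null_comparison[rotated]) (intro always_eventually allI assms(1))
  then show ?thesis
    by (rule LIM_zero_cancel)
qed

lemma small_gain_columns:
  fixes \<sigma>R \<sigma>C m k1 k2 k3 k4 \<alpha> p s \<rho> :: real
  defines "T \<equiv> k1 + p * k2 + s * k4 + 1"
  assumes \<alpha>T: "\<alpha> * T \<le> (1 - \<sigma>R) / 4" "\<alpha> * T \<le> s * (1 - \<sigma>C) / 2"
    and sk3: "s * k3 \<le> (1 - \<sigma>R) / 2" and pm: "p * m = 2 * (k1 + s * k4 + 1)"
    and nonneg: "0 \<le> \<alpha>" "0 \<le> p" "0 \<le> s"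
    and \<rho>: "(3 + \<sigma>R) / 4 \<le> \<rho>" "1 - \<alpha> * m / 2 \<le> \<rho>" "(1 + \<sigma>C) / 2 \<le> \<rho>"
  shows "(\<sigma>R + \<alpha> * k1) + p * (\<alpha> * k2) + s * (k3 + \<alpha> * k4) \<le> \<rho>"
    and "\<alpha> * k1 + p * (1 - \<alpha> * m) + s * (\<alpha> * k4) \<le> \<rho> * p"
    and "\<alpha> * k1 + p * (\<alpha> * k2) + s * (\<sigma>C + \<alpha> * k4) \<le> \<rho> * s"
proof -
  have "(\<sigma>R + \<alpha> * k1) + p * (\<alpha> * k2) + s * (k3 + \<alpha> * k4) = \<sigma>R + s * k3 + (\<alpha> * T - \<alpha>)"
    by (simp add: T_def algebra_simps)
  also have "\<dots> \<le> \<rho>"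
    using \<alpha>T(1) sk3 nonneg(1) \<rho>(1) by argo
  finally show "(\<sigma>R + \<alpha> * k1) + p * (\<alpha> * k2) + s * (k3 + \<alpha> * k4) \<le> \<rho>" .
  have "\<alpha> * k1 + p * (1 - \<alpha> * m) + s * (\<alpha> * k4) \<le> (1 - \<alpha> * m / 2) * p"
    using pm nonneg by (simp add: algebra_simps)
  also have "\<dots> \<le> \<rho> * p"
    using nonneg \<rho> by (intro mult_right_mono) auto
  finally show "\<alpha> * k1 + p * (1 - \<alpha> * m) + s * (\<alpha> * k4) \<le> \<rho> * p" .
  have "\<alpha> * k1 + p * (\<alpha> * k2) + s * (\<sigma>C + \<alpha> * k4) = s * \<sigma>C + (\<alpha> * T - \<alpha>)"
    by (simp add: T_def algebra_simps)
  also have "\<dots> \<le> (1 + \<sigma>C) / 2 * s"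
    using \<alpha>T nonneg by (simp add: algebra_simps)
  also have "\<dots> \<le> \<rho> * s"
    using nonneg \<rho> by (intro mult_right_mono) auto
  finally show "\<alpha> * k1 + p * (\<alpha> * k2) + s * (\<sigma>C + \<alpha> * k4) \<le> \<rho> * s" .
qed

text \<open>The weights \<open>1, p, s\<close> and step size \<open>\<alpha>\<close> for the three coupled error recursions of the
  algorithm (consensus, optimality, tracking): \<open>p\<close> is large enough that the optimality error absorbs the
  cross terms, and \<open>s\<close> small enough that the tracking error does not feed back into the consensus error.\<close>
lemma small_gain_weights:
  fixes \<sigma>R \<sigma>C m k1 k2 k3 k4 \<alpha>max :: real
  assumes \<sigma>R: "0 \<le> \<sigma>R" "\<sigma>R < 1" and \<sigma>C: "0 \<le> \<sigma>C" "\<sigma>C < 1" and m: "0 < m"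
    and k: "0 \<le> k1" "0 \<le> k2" "0 \<le> k3" "0 \<le> k4" and \<alpha>max: "0 < \<alpha>max"
  shows "\<exists>\<alpha> p s \<rho>. 0 < \<alpha> \<and> \<alpha> \<le> \<alpha>max \<and> \<alpha> * m \<le> 1 \<and> 0 < p \<and> 0 < s \<and> 0 < \<rho> \<and> \<rho> < 1 \<and>
     (\<sigma>R + \<alpha> * k1) + p * (\<alpha> * k2) + s * (k3 + \<alpha> * k4) \<le> \<rho> \<and>
     \<alpha> * k1 + p * (1 - \<alpha> * m) + s * (\<alpha> * k4) \<le> \<rho> * p \<and>
     \<alpha> * k1 + p * (\<alpha> * k2) + s * (\<sigma>C + \<alpha> * k4) \<le> \<rho> * s"
proof -
  define s where "s = (1 - \<sigma>R) / (2 * (k3 + 1))"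
  define p where "p = 2 * (k1 + s * k4 + 1) / m"
  define T where "T = k1 + p * k2 + s * k4 + 1"
  define \<alpha> where "\<alpha> = min \<alpha>max (min ((1 - \<sigma>R) / (4 * T)) (min (s * (1 - \<sigma>C) / (2 * T)) (1 / m)))"
  define \<rho> where "\<rho> = max ((3 + \<sigma>R) / 4) (max (1 - \<alpha> * m / 2) ((1 + \<sigma>C) / 2))"
  have s: "0 < s" and p: "0 < p" and T: "1 \<le> T"
    using \<sigma>R k m by (auto simp: s_def p_def T_def add_nonneg_pos)
  have "\<alpha> \<le> 1 / m" "\<alpha> \<le> (1 - \<sigma>R) / (4 * T)" "\<alpha> \<le> s * (1 - \<sigma>C) / (2 * T)"
    by (simp_all add: \<alpha>_def)
  then have \<alpha>: "\<alpha> * m \<le> 1" "\<alpha> * T \<le> (1 - \<sigma>R) / 4" "\<alpha> * T \<le> s * (1 - \<sigma>C) / 2"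
    using m T by (simp_all add: pos_le_divide_eq field_simps)
  have pos: "0 < \<alpha>" "\<alpha> \<le> \<alpha>max"
    using \<alpha>max \<sigma>R \<sigma>C s T m by (auto simp: \<alpha>_def)
  have \<rho>: "0 < \<rho>" "\<rho> < 1"
    using \<sigma>R \<sigma>C \<alpha> pos m by (auto simp: \<rho>_def)
  have "(3 + \<sigma>R) / 4 \<le> \<rho>" "1 - \<alpha> * m / 2 \<le> \<rho>" "(1 + \<sigma>C) / 2 \<le> \<rho>"
    unfolding \<rho>_def by (rule max.cobounded1, rule max.coboundedI2, rule max.cobounded1,
        rule max.coboundedI2, rule max.cobounded2)
  moreover have "s * k3 \<le> (1 - \<sigma>R) / 2"
    using \<sigma>R k by (simp add: s_def field_simps)
  moreover have "p * m = 2 * (k1 + s * k4 + 1)"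
    using m by (simp add: p_def)
  ultimately have "(\<sigma>R + \<alpha> * k1) + p * (\<alpha> * k2) + s * (k3 + \<alpha> * k4) \<le> \<rho>"
    "\<alpha> * k1 + p * (1 - \<alpha> * m) + s * (\<alpha> * k4) \<le> \<rho> * p"
    "\<alpha> * k1 + p * (\<alpha> * k2) + s * (\<sigma>C + \<alpha> * k4) \<le> \<rho> * s"
    using small_gain_columns[of \<alpha> k1 p k2 s k4 \<sigma>R \<sigma>C k3 m \<rho>] \<alpha> pos p s unfolding T_def by auto
  then show ?thesis
    using \<alpha>(1) pos p s \<rho> by blast
qed

section \<open>Convergence of the algorithm\<close>

text \<open>Besides the data of the theorem and a zero \<open>xs\<close> of the game map, the locale fixes the
  stationary distribution \<open>u\<close> of \<open>R\<close>, the vector \<open>v\<close> that on each cluster is the positive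
  right eigenvector of \<open>C\<close> with sum \<open>1\<close>, and norms \<open>nR\<close>, \<open>nC\<close> in which \<open>R - 1 u\<^sup>T\<close> and
  \<open>C - diag(v) 1 1\<^sup>T\<close> (blockwise) contract.\<close>
locale ne_tracking =
  fixes cl :: "'a::finite \<Rightarrow> 'h" and blk :: "'q::finite \<Rightarrow> 'h" and grad :: "'a \<Rightarrow> real^'q \<Rightarrow> real^'q"
    and R C :: "real^'a^'a" and L \<mu> :: real and xs :: "real^'q"
    and u v :: "'a \<Rightarrow> real" and nR nC :: "(real^'q)^'a \<Rightarrow> real" and cR cC \<sigma>R \<sigma>C :: real
  assumes A1: "A1 cl C" and A2: "A2 R"
    and u_pos: "\<And>j. 0 < u j" and u_sum: "(\<Sum>j\<in>UNIV. u j) = 1"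
    and u_stationary: "\<And>j. (\<Sum>l\<in>UNIV. u l * R $ l $ j) = u j"
    and v_pos: "\<And>j. 0 < v j" and v_cluster_sum: "\<And>i. (\<Sum>j\<in>{j. cl j = cl i}. v j) = 1"
    and v_eigen: "\<And>j. (\<Sum>l\<in>UNIV. v l * C $ j $ l) = v j"
    and nR: "contracting_norm (kact (\<lambda>a b. R $ a $ b - u b)) nR cR \<sigma>R"
    and nC: "contracting_norm (kact (\<lambda>a b. C $ a $ b - (if cl a = cl b then v a else 0))) nC cC \<sigma>C"
    and L: "0 < L" and lip: "\<And>a x z. norm (pgrad blk cl grad a x - pgrad blk cl grad a z) \<le> L * norm (x - z)"
    and \<mu>: "0 < \<mu>"
    and smon: "\<And>x z. \<mu> * (norm (x - z))\<^sup>2 \<le> (game_map blk cl grad x - game_map blk cl grad z) \<bullet> (x - z)"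
    and xs_zero: "game_map blk cl grad xs = 0"
begin

abbreviation "pg \<equiv> pgrad blk cl grad"
abbreviation "M \<equiv> game_map blk cl grad"

definition n :: real where "n = real CARD('a)"

definition Rmix :: "(real^'q)^'a \<Rightarrow> (real^'q)^'a" where "Rmix = kact (\<lambda>a b. R $ a $ b)"
definition Cmix :: "(real^'q)^'a \<Rightarrow> (real^'q)^'a" where "Cmix = kact (\<lambda>a b. C $ a $ b)"
definition Rdev :: "(real^'q)^'a \<Rightarrow> (real^'q)^'a" where "Rdev = kact (\<lambda>a b. R $ a $ b - u b)"
definition Cdev :: "(real^'q)^'a \<Rightarrow> (real^'q)^'a" where
  "Cdev = kact (\<lambda>a b. C $ a $ b - (if cl a = cl b then v a else 0))"

definition stack :: "real^'q \<Rightarrow> (real^'q)^'a" where "stack w = (\<chi> a. w)"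
definition uavg :: "(real^'q)^'a \<Rightarrow> real^'q" where "uavg z = (\<Sum>a\<in>UNIV. u a *\<^sub>R z $ a)"
definition cluster_total :: "(real^'q)^'a \<Rightarrow> 'a \<Rightarrow> real^'q" where
  "cluster_total z a = (\<Sum>b\<in>{b. cl b = cl a}. z $ b)"
definition Vproj :: "(real^'q)^'a \<Rightarrow> (real^'q)^'a" where "Vproj z = (\<chi> a. v a *\<^sub>R cluster_total z a)"
definition pgrads :: "(real^'q)^'a \<Rightarrow> (real^'q)^'a" where "pgrads z = (\<chi> a. pg a (z $ a))"

lemma n_ge_1: "1 \<le> n"
  by (simp add: n_def)

lemma R_nonneg: "0 \<le> R $ a $ b" and R_row_sum: "(\<Sum>b\<in>UNIV. R $ a $ b) = 1"
  using A2 by (auto simp: A2_def)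

lemma C_cross_zero: "cl a \<noteq> cl b \<Longrightarrow> C $ a $ b = 0"
  and C_col_sum: "(\<Sum>a\<in>{a. cl a = cl b}. C $ a $ b) = 1"
  using A1 by (auto simp: A1_def)

lemma R_le_1: "R $ a $ b \<le> 1"
  using member_le_sum[of b UNIV "\<lambda>b. R $ a $ b"] R_row_sum[of a] R_nonneg by simp

lemma u_le_1: "u j \<le> 1"
  using member_le_sum[of j UNIV u] u_sum u_pos by (simp add: less_imp_le)

lemma v_le_1: "v j \<le> 1"
  using member_le_sum[of j "{j'. cl j' = cl j}" v] v_cluster_sum[of j] v_pos by (simp add: less_imp_le)

lemma Rmix_stack: "Rmix (stack w) = stack w"
  by (simp add: Rmix_def stack_def vec_eq_iff scaleR_sum_left[symmetric] R_row_sum)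

lemma uavg_stack: "uavg (stack w) = w"
  by (simp add: uavg_def stack_def scaleR_sum_left[symmetric] u_sum)

lemma uavg_add: "uavg (z + w) = uavg z + uavg w"
  and uavg_diff: "uavg (z - w) = uavg z - uavg w"
  and uavg_scaleR: "uavg (t *\<^sub>R z) = t *\<^sub>R uavg z"
  by (simp_all add: uavg_def scaleR_add_right scaleR_diff_right sum.distrib sum_subtractf
      scaleR_sum_right mult.commute)

lemma uavg_Rmix: "uavg (Rmix z) = uavg z"
proof -
  have "uavg (Rmix z) = (\<Sum>b\<in>UNIV. (\<Sum>a\<in>UNIV. u a * R $ a $ b) *\<^sub>R z $ b)"
    unfolding uavg_def Rmix_def kact_nth scaleR_sum_right scaleR_sum_left scaleR_scaleR
    by (rule sum.swap)
  then show ?thesis by (simp add: u_stationary uavg_def)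
qed

lemma Rdev_eq: "Rdev z = Rmix z - stack (uavg z)"
proof -
  have "kact (\<lambda>a b. u b) z = stack (uavg z)"
    by (simp add: stack_def uavg_def vec_eq_iff)
  then show ?thesis by (simp add: Rdev_def Rmix_def kact_kernel_diff)
qed

lemma Rdev_stack: "Rdev (stack w) = 0"
  by (simp add: Rdev_eq Rmix_stack uavg_stack)

lemma cluster_total_add: "cluster_total (z + w) a = cluster_total z a + cluster_total w a"
  and cluster_total_diff: "cluster_total (z - w) a = cluster_total z a - cluster_total w a"
  by (simp_all add: cluster_total_def sum.distrib sum_subtractf)

lemma cluster_total_cong: "cl b = cl a \<Longrightarrow> cluster_total z b = cluster_total z a"
  by (simp add: cluster_total_def)

lemma cluster_total_Cmix: "cluster_total (Cmix z) a = cluster_total z a"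
proof -
  have "cluster_total (Cmix z) a = (\<Sum>c\<in>UNIV. (\<Sum>b\<in>{b. cl b = cl a}. C $ b $ c) *\<^sub>R z $ c)"
    unfolding cluster_total_def Cmix_def kact_nth scaleR_sum_left by (rule sum.swap)
  also have "\<dots> = (\<Sum>c\<in>UNIV. if cl c = cl a then z $ c else 0)"
  proof (rule sum.cong)
    fix c
    show "(\<Sum>b\<in>{b. cl b = cl a}. C $ b $ c) *\<^sub>R z $ c = (if cl c = cl a then z $ c else 0)"
    proof (cases "cl c = cl a")
      case True
      then show ?thesis using C_col_sum[of c] by simp
    next
      case False
      then have "(\<Sum>b\<in>{b. cl b = cl a}. C $ b $ c) = 0"
        by (intro sum.neutral) (auto intro: C_cross_zero)
      then show ?thesis using False by simp
    qed
  qed simp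
  also have "\<dots> = cluster_total z a"
    by (simp add: cluster_total_def sum.inter_filter[symmetric])
  finally show ?thesis .
qed

lemma kact_Vproj: "kact (\<lambda>a b. if cl a = cl b then v a else 0) z = Vproj z"
proof -
  have "(\<Sum>b\<in>UNIV. (if cl a = cl b then v a else 0) *\<^sub>R z $ b)
      = (\<Sum>b\<in>UNIV. if cl b = cl a then v a *\<^sub>R z $ b else 0)" for a
    by (rule sum.cong) auto
  then show ?thesis
    by (simp add: Vproj_def cluster_total_def vec_eq_iff sum.inter_filter[symmetric] scaleR_sum_right)
qed

lemma Cdev_eq: "Cdev z = Cmix z - Vproj z"
  by (simp add: Cdev_def Cmix_def kact_kernel_diff kact_Vproj)

lemma Vproj_add: "Vproj (z + w) = Vproj z + Vproj w"
  and Vproj_diff: "Vproj (z - w) = Vproj z - Vproj w"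
  by (simp_all add: Vproj_def cluster_total_add cluster_total_diff vec_eq_iff
      scaleR_add_right scaleR_diff_right)

lemma Vproj_Cmix: "Vproj (Cmix z) = Vproj z"
  by (simp add: Vproj_def cluster_total_Cmix)

lemma Cmix_Vproj: "Cmix (Vproj z) = Vproj z"
proof -
  have "(\<Sum>b\<in>UNIV. C $ a $ b *\<^sub>R (v b *\<^sub>R cluster_total z b))
      = (\<Sum>b\<in>UNIV. (v b * C $ a $ b) *\<^sub>R cluster_total z a)" for a
  proof (rule sum.cong)
    show "C $ a $ b *\<^sub>R (v b *\<^sub>R cluster_total z b) = (v b * C $ a $ b) *\<^sub>R cluster_total z a" for b
      using cluster_total_cong[of b a z] C_cross_zero[of a b]
      by (cases "cl b = cl a") (auto simp: mult.commute)
  qed simp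
  then show ?thesis
    by (simp add: Cmix_def Vproj_def vec_eq_iff scaleR_sum_left[symmetric] v_eigen del: scaleR_scaleR)
qed

lemma Vproj_Vproj: "Vproj (Vproj z) = Vproj z"
proof -
  have "cluster_total (Vproj z) a = cluster_total z a" for a
  proof -
    have "cluster_total (Vproj z) a = (\<Sum>b\<in>{b. cl b = cl a}. v b *\<^sub>R cluster_total z b)"
      unfolding cluster_total_def[of "Vproj z"] by (simp add: Vproj_def)
    also have "\<dots> = (\<Sum>b\<in>{b. cl b = cl a}. v b *\<^sub>R cluster_total z a)"
      by (intro sum.cong refl) (metis (mono_tags) cluster_total_cong mem_Collect_eq)
    finally show ?thesis
      using v_cluster_sum[of a] by (simp add: scaleR_sum_left[symmetric])
  qed
  then show ?thesis
    by (simp add: Vproj_def)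
qed

lemma Cdev_Vproj: "Cdev (Vproj z) = 0"
  by (simp add: Cdev_eq Cmix_Vproj Vproj_Vproj)

lemma norm_stack_le: "norm (stack w) \<le> n * norm w"
proof -
  have "norm (stack w) \<le> (\<Sum>a\<in>UNIV. norm (stack w $ a))"
    unfolding norm_vec_def by (rule L2_set_le_sum) simp
  then show ?thesis by (simp add: stack_def n_def)
qed

lemma norm_Rmix_le: "norm (Rmix z) \<le> n * n * norm z"
  using norm_kact_le[of "\<lambda>a b. R $ a $ b" 1 z] R_nonneg R_le_1 by (simp add: Rmix_def n_def)

lemma norm_Vproj_le: "norm (Vproj z) \<le> n * n * norm z"
proof -
  have "\<bar>if cl a = cl b then v a else 0\<bar> \<le> 1" for a b
    using v_le_1[of a] v_pos[of a] by auto
  then show ?thesis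
    using norm_kact_le[of "\<lambda>a b. if cl a = cl b then v a else 0" 1 z] by (simp add: kact_Vproj n_def)
qed

lemma norm_uavg_le: "norm (uavg z) \<le> n * norm z"
proof -
  have "norm (uavg z) \<le> (\<Sum>a\<in>UNIV. norm (u a *\<^sub>R z $ a))"
    unfolding uavg_def by (rule norm_sum)
  also have "\<dots> \<le> (\<Sum>a\<in>(UNIV::'a set). norm z)"
  proof (rule sum_mono)
    show "norm (u a *\<^sub>R z $ a) \<le> norm z" for a
      using u_le_1[of a] u_pos[of a] Finite_Cartesian_Product.norm_nth_le[of z a]
      by (simp add: mult_le_one order_trans[OF mult_left_le_one_le])
  qed
  finally show ?thesis by (simp add: n_def)
qed

lemma pgrads_lipschitz: "norm (pgrads z - pgrads z') \<le> L * norm (z - z')"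
proof -
  have "norm (pgrads z - pgrads z') \<le> norm (L *\<^sub>R (z - z'))"
  proof (rule norm_le_componentwise_cart)
    show "norm ((pgrads z - pgrads z') $ i) \<le> norm ((L *\<^sub>R (z - z')) $ i)" for i
      using lip[of i "z $ i" "z' $ i"] L by (simp add: pgrads_def)
  qed
  then show ?thesis using L by simp
qed

lemma Vproj_pgrads_stack_xs: "Vproj (pgrads (stack xs)) = 0"
proof -
  have "cluster_total (pgrads (stack xs)) a = (\<Sum>b\<in>{b. cl b = cl a}. pg b xs)" for a
    by (simp add: cluster_total_def pgrads_def stack_def)
  then show ?thesis
    using cluster_pgrad_sum_eq_0[OF xs_zero] by (simp add: Vproj_def vec_eq_iff)
qed

definition X :: "real \<Rightarrow> ('a \<Rightarrow> real^'q) \<Rightarrow> nat \<Rightarrow> (real^'q)^'a" where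
  "X \<alpha> x0 k = (\<chi> a. fst (iter blk cl grad R C \<alpha> x0 k) a)"

definition Y :: "real \<Rightarrow> ('a \<Rightarrow> real^'q) \<Rightarrow> nat \<Rightarrow> (real^'q)^'a" where
  "Y \<alpha> x0 k = (\<chi> a. snd (iter blk cl grad R C \<alpha> x0 k) a)"

lemma X_Suc: "X \<alpha> x0 (Suc k) = Rmix (X \<alpha> x0 k - \<alpha> *\<^sub>R Y \<alpha> x0 k)"
  by (simp add: X_def Y_def Rmix_def Let_def vec_eq_iff)

lemma Y_Suc: "Y \<alpha> x0 (Suc k) = Cmix (Y \<alpha> x0 k) + pgrads (X \<alpha> x0 (Suc k)) - pgrads (X \<alpha> x0 k)"
  by (simp add: X_def Y_def Cmix_def pgrads_def Let_def vec_eq_iff)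

text \<open>Gradient tracking: \<open>C\<close> is column stochastic on each cluster, so the cluster totals of \<open>Y\<close>
  always equal those of the current partial gradients.\<close>
lemma cluster_total_Y: "cluster_total (Y \<alpha> x0 k) a = cluster_total (pgrads (X \<alpha> x0 k)) a"
proof (induction k arbitrary: a)
  case 0
  then show ?case by (simp add: X_def Y_def pgrads_def)
next
  case (Suc k)
  then show ?case
    by (simp add: Y_Suc cluster_total_add cluster_total_diff cluster_total_Cmix)
qed

lemma Vproj_Y: "Vproj (Y \<alpha> x0 k) = Vproj (pgrads (X \<alpha> x0 k))"
  by (simp add: Vproj_def cluster_total_Y)

definition weight :: "'h \<Rightarrow> real" where "weight h = (\<Sum>a\<in>{a. cl a = h}. u a * v a)"
definition min_weight :: real where "min_weight = Min (range (\<lambda>j. weight (blk j)))"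
definition rescale :: "real^'q \<Rightarrow> real^'q" where "rescale e = (\<chi> j. e $ j / sqrt (weight (blk j)))"
definition wgame_map :: "real^'q \<Rightarrow> real^'q" where "wgame_map x = (\<Sum>b\<in>UNIV. weight (cl b) *\<^sub>R pg b x)"

lemma weight_nonneg: "0 \<le> weight h"
  unfolding weight_def using u_pos v_pos by (intro sum_nonneg) (simp add: less_imp_le)

lemma weight_le_1: "weight h \<le> 1"
proof -
  have "weight h \<le> (\<Sum>a\<in>{a. cl a = h}. u a)"
    unfolding weight_def using u_pos v_le_1 by (intro sum_mono mult_left_le) (auto intro: less_imp_le)
  also have "\<dots> \<le> (\<Sum>a\<in>UNIV. u a)"
    using u_pos by (intro sum_mono2) (auto intro: less_imp_le)
  finally show ?thesis using u_sum by simp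
qed

lemma weight_blk_pos: "0 < weight (blk j)"
proof -
  obtain a where a: "cl a = blk j"
    using block_has_agent[OF \<mu> smon] by blast
  have "u a * v a \<le> weight (blk j)"
    unfolding weight_def using a u_pos v_pos by (intro member_le_sum) (auto intro: less_imp_le)
  then show ?thesis
    using u_pos[of a] v_pos[of a] by (meson mult_pos_pos order_less_le_trans)
qed

lemma min_weight_pos: "0 < min_weight"
  unfolding min_weight_def using weight_blk_pos by (subst Min_gr_iff) auto

lemma min_weight_le: "min_weight \<le> weight (blk j)"
  unfolding min_weight_def by (rule Min_le) auto

lemma rescale_diff: "rescale (e - e') = rescale e - rescale e'"
  and rescale_scaleR: "rescale (t *\<^sub>R e) = t *\<^sub>R rescale e"
  by (simp_all add: rescale_def vec_eq_iff diff_divide_distrib)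

lemma norm_le_norm_rescale: "norm e \<le> norm (rescale e)"
proof (rule norm_le_componentwise_cart)
  fix j
  have w: "0 < sqrt (weight (blk j))" "sqrt (weight (blk j)) \<le> 1"
    using weight_blk_pos[of j] weight_le_1 by auto
  then have "\<bar>e $ j\<bar> \<le> \<bar>e $ j\<bar> / sqrt (weight (blk j))"
    by (simp add: le_divide_eq mult_left_le)
  then show "norm (e $ j) \<le> norm (rescale e $ j)"
    using w by (simp add: rescale_def abs_divide)
qed

lemma norm_rescale_le: "norm (rescale e) \<le> norm e / sqrt min_weight"
proof -
  have "norm (rescale e) \<le> norm ((1 / sqrt min_weight) *\<^sub>R e)"
  proof (rule norm_le_componentwise_cart)
    fix j
    have "0 < sqrt min_weight" "sqrt min_weight \<le> sqrt (weight (blk j))"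
      using min_weight_pos min_weight_le[of j] by auto
    then show "norm (rescale e $ j) \<le> norm (((1 / sqrt min_weight) *\<^sub>R e) $ j)"
      by (simp add: rescale_def abs_divide divide_left_mono)
  qed
  then show ?thesis
    using min_weight_pos by simp
qed

lemma wgame_map_nth: "wgame_map x $ j = weight (blk j) * M x $ j"
proof -
  have "wgame_map x $ j = (\<Sum>b\<in>UNIV. if cl b = blk j then weight (blk j) * grad b x $ j else 0)"
    unfolding wgame_map_def by (auto simp: pgrad_def intro: sum.cong)
  then show ?thesis
    by (simp add: game_map_def sum_distrib_left sum.inter_filter[symmetric])
qed

lemma wgame_map_xs: "wgame_map xs = 0"
  using xs_zero by (simp add: vec_eq_iff wgame_map_nth)

text \<open>The rescaling by \<open>1 / sqrt (weight (blk j))\<close> turns the weighted game map back into an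
  inner product with the game map, so it inherits strong monotonicity.\<close>
lemma inner_rescale_wgame_map: "rescale (wgame_map x - wgame_map z) \<bullet> rescale e = (M x - M z) \<bullet> e"
  unfolding inner_vec_def
proof (rule sum.cong)
  fix j
  have w: "sqrt (weight (blk j)) * sqrt (weight (blk j)) = weight (blk j)" "weight (blk j) \<noteq> 0"
    using weight_blk_pos[of j] by simp_all
  have "rescale (wgame_map x - wgame_map z) $ j * rescale e $ j
      = (weight (blk j) * ((M x - M z) $ j * e $ j)) / (sqrt (weight (blk j)) * sqrt (weight (blk j)))"
    by (simp add: rescale_def wgame_map_nth right_diff_distrib)
  also have "\<dots> = (M x - M z) $ j * e $ j"
    using w by simp
  finally show "rescale (wgame_map x - wgame_map z) $ j \<bullet> rescale e $ j = (M x - M z) $ j \<bullet> e $ j"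
    by simp
qed simp

lemma norm_rescale_wgame_map_le: "norm (rescale (wgame_map x - wgame_map z)) \<le> norm (M x - M z)"
proof (rule norm_le_componentwise_cart)
  fix j
  have w: "0 < sqrt (weight (blk j))" "sqrt (weight (blk j)) \<le> 1"
    using weight_blk_pos[of j] weight_le_1 by auto
  have "rescale (wgame_map x - wgame_map z) $ j = (weight (blk j) / sqrt (weight (blk j))) * (M x - M z) $ j"
    by (simp add: rescale_def wgame_map_nth right_diff_distrib diff_divide_distrib)
  also have "\<dots> = sqrt (weight (blk j)) * (M x - M z) $ j"
    using weight_blk_pos[of j] by (simp add: real_div_sqrt)
  finally have "rescale (wgame_map x - wgame_map z) $ j = sqrt (weight (blk j)) * (M x - M z) $ j" .
  then show "norm (rescale (wgame_map x - wgame_map z) $ j) \<le> norm ((M x - M z) $ j)"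
    using w by (simp add: abs_mult mult_left_le_one_le)
qed

lemma norm_game_map_diff_le: "norm (M x - M z) \<le> n * L * norm (x - z)"
  using game_map_lipschitz[OF lip] by (simp add: n_def)

lemma power2_norm_rescale_wgame_map_le:
  "(norm (rescale (wgame_map x - wgame_map z)))\<^sup>2 \<le> (n * L)\<^sup>2 * (norm (x - z))\<^sup>2"
proof -
  have "norm (rescale (wgame_map x - wgame_map z)) \<le> n * L * norm (x - z)"
    using norm_rescale_wgame_map_le[of x z] norm_game_map_diff_le[of x z] by simp
  then show ?thesis
    by (metis norm_ge_zero power_mono power_mult_distrib)
qed

lemma min_weight_power2_norm_rescale_le: "min_weight * (norm (rescale e))\<^sup>2 \<le> (norm e)\<^sup>2"
proof -
  have "(norm (rescale e))\<^sup>2 \<le> (norm e / sqrt min_weight)\<^sup>2"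
    using norm_rescale_le[of e] by (simp add: power_mono)
  then show ?thesis
    using min_weight_pos by (simp add: power_divide field_simps)
qed

definition rate :: real where "rate = \<mu> * min_weight / 2"

lemma rate_pos: "0 < rate"
  using \<mu> min_weight_pos by (simp add: rate_def)

lemma rescaled_gradient_step_contracts:
  assumes \<alpha>: "0 \<le> \<alpha>" "\<alpha> * (n * L)\<^sup>2 \<le> \<mu>" "\<alpha> * rate \<le> 1"
  shows "norm (rescale (x - z) - \<alpha> *\<^sub>R rescale (wgame_map x - wgame_map z))
    \<le> (1 - \<alpha> * rate) * norm (rescale (x - z))"
proof -
  define e where "e = x - z"
  define S where "S = norm (rescale e)"
  define D where "D = rescale (wgame_map x - wgame_map z)"
  have De: "\<mu> * (norm e)\<^sup>2 \<le> D \<bullet> rescale e"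
    using smon[of x z] inner_rescale_wgame_map[of x z e] by (simp add: D_def e_def)
  have "(norm (rescale e - \<alpha> *\<^sub>R D))\<^sup>2 = S\<^sup>2 - 2 * \<alpha> * (D \<bullet> rescale e) + \<alpha>\<^sup>2 * (norm D)\<^sup>2"
    unfolding S_def by (rule power2_norm_diff_scaleR)
  also have "\<dots> \<le> S\<^sup>2 - 2 * \<alpha> * (\<mu> * (norm e)\<^sup>2) + \<alpha> * (\<alpha> * (n * L)\<^sup>2) * (norm e)\<^sup>2"
    using De power2_norm_rescale_wgame_map_le[of x z] \<alpha>(1)
    by (simp add: D_def e_def power2_eq_square mult_left_mono add_mono mult.assoc)
  also have "\<dots> \<le> S\<^sup>2 - \<alpha> * \<mu> * (norm e)\<^sup>2"
  proof -
    have "\<alpha> * (\<alpha> * (n * L)\<^sup>2) * (norm e)\<^sup>2 \<le> \<alpha> * \<mu> * (norm e)\<^sup>2"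
      using \<alpha>(1,2) by (intro mult_right_mono mult_left_mono) auto
    then show ?thesis by (simp add: algebra_simps)
  qed
  also have "\<dots> \<le> S\<^sup>2 - 2 * (\<alpha> * rate) * S\<^sup>2"
    using min_weight_power2_norm_rescale_le[of e] \<alpha>(1) \<mu>
    by (simp add: S_def rate_def mult_left_mono algebra_simps)
  also have "\<dots> \<le> ((1 - \<alpha> * rate) * S)\<^sup>2"
  proof -
    have "S\<^sup>2 - 2 * (\<alpha> * rate) * S\<^sup>2 + (\<alpha> * rate * S)\<^sup>2 = ((1 - \<alpha> * rate) * S)\<^sup>2"
      by (simp add: power2_eq_square algebra_simps)
    then show ?thesis
      using zero_le_power2[of "\<alpha> * rate * S"] by linarith
  qed
  finally have "(norm (rescale e - \<alpha> *\<^sub>R D))\<^sup>2 \<le> ((1 - \<alpha> * rate) * S)\<^sup>2" .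
  then have "norm (rescale e - \<alpha> *\<^sub>R D) \<le> (1 - \<alpha> * rate) * S"
    by (rule power2_le_imp_le) (use \<alpha>(3) in \<open>simp add: S_def\<close>)
  then show ?thesis
    by (simp add: S_def D_def e_def rescale_diff)
qed

definition cons_dev :: "real \<Rightarrow> ('a \<Rightarrow> real^'q) \<Rightarrow> nat \<Rightarrow> (real^'q)^'a" where
  "cons_dev \<alpha> x0 k = X \<alpha> x0 k - stack (uavg (X \<alpha> x0 k))"

definition track_dev :: "real \<Rightarrow> ('a \<Rightarrow> real^'q) \<Rightarrow> nat \<Rightarrow> (real^'q)^'a" where
  "track_dev \<alpha> x0 k = Y \<alpha> x0 k - Vproj (Y \<alpha> x0 k)"

definition cons_err :: "real \<Rightarrow> ('a \<Rightarrow> real^'q) \<Rightarrow> nat \<Rightarrow> real" where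
  "cons_err \<alpha> x0 k = nR (cons_dev \<alpha> x0 k)"

definition track_err :: "real \<Rightarrow> ('a \<Rightarrow> real^'q) \<Rightarrow> nat \<Rightarrow> real" where
  "track_err \<alpha> x0 k = nC (track_dev \<alpha> x0 k)"

definition opt_err :: "real \<Rightarrow> ('a \<Rightarrow> real^'q) \<Rightarrow> nat \<Rightarrow> real" where
  "opt_err \<alpha> x0 k = norm (rescale (uavg (X \<alpha> x0 k) - xs))"

lemma Rdev_add: "Rdev (z + w) = Rdev z + Rdev w"
  and Cdev_add: "Cdev (z + w) = Cdev z + Cdev w"
  by (simp_all add: Rdev_def Cdev_def kact_add)

lemma nR_ge: "norm z \<le> nR z" and nR_le: "nR z \<le> cR * norm z" and \<sigma>R: "0 \<le> \<sigma>R" "\<sigma>R < 1"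
  and nR_Rdev: "nR (Rdev z) \<le> \<sigma>R * nR z" and nR_triangle: "nR (z + z') \<le> nR z + nR z'"
  and nR_scaleR: "nR (t *\<^sub>R z) = \<bar>t\<bar> * nR z"
  using nR by (auto simp: contracting_norm_def Rdev_def)

lemma nC_ge: "norm z \<le> nC z" and nC_le: "nC z \<le> cC * norm z" and \<sigma>C: "0 \<le> \<sigma>C" "\<sigma>C < 1"
  and nC_Cdev: "nC (Cdev z) \<le> \<sigma>C * nC z" and nC_triangle: "nC (z + z') \<le> nC z + nC z'"
  using nC by (auto simp: contracting_norm_def Cdev_def)

lemma nR_nonneg: "0 \<le> nR z" and nC_nonneg: "0 \<le> nC z"
  using nR_ge[of z] nC_ge[of z] norm_ge_zero order_trans by blast+

lemma cR_ge_1: "1 \<le> cR" and cC_ge_1: "1 \<le> cC"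
proof -
  define z :: "(real^'q)^'a" where "z = (\<chi> a. axis undefined 1)"
  have "0 < norm z"
    by (simp add: z_def vec_eq_iff axis_def)
  moreover have "norm z \<le> cR * norm z" "norm z \<le> cC * norm z"
    using nR_ge[of z] nR_le[of z] nC_ge[of z] nC_le[of z] by linarith+
  ultimately show "1 \<le> cR" "1 \<le> cC"
    by (simp_all add: mult_le_cancel_right1)
qed

lemma norm_X_dev_le: "norm (X \<alpha> x0 k - stack xs) \<le> cons_err \<alpha> x0 k + n * opt_err \<alpha> x0 k"
proof -
  have "X \<alpha> x0 k - stack xs = cons_dev \<alpha> x0 k + stack (uavg (X \<alpha> x0 k) - xs)"
    by (simp add: cons_dev_def stack_def vec_eq_iff)
  then have "norm (X \<alpha> x0 k - stack xs) \<le> norm (cons_dev \<alpha> x0 k) + norm (stack (uavg (X \<alpha> x0 k) - xs))"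
    by (simp add: norm_triangle_ineq)
  also have "\<dots> \<le> nR (cons_dev \<alpha> x0 k) + n * opt_err \<alpha> x0 k"
    using nR_ge norm_stack_le[of "uavg (X \<alpha> x0 k) - xs"] norm_le_norm_rescale[of "uavg (X \<alpha> x0 k) - xs"]
      n_ge_1 unfolding opt_err_def by (smt (verit, best) mult_left_mono)
  finally show ?thesis by (simp add: cons_err_def)
qed

lemma norm_Y_le:
  "norm (Y \<alpha> x0 k) \<le> track_err \<alpha> x0 k + n * n * L * (cons_err \<alpha> x0 k + n * opt_err \<alpha> x0 k)"
proof -
  have "Y \<alpha> x0 k = track_dev \<alpha> x0 k + Vproj (pgrads (X \<alpha> x0 k) - pgrads (stack xs))"
    by (simp add: track_dev_def Vproj_diff Vproj_pgrads_stack_xs Vproj_Y)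
  then have "norm (Y \<alpha> x0 k) \<le> nC (track_dev \<alpha> x0 k) + n * n * norm (pgrads (X \<alpha> x0 k) - pgrads (stack xs))"
    using nC_ge[of "track_dev \<alpha> x0 k"] norm_Vproj_le[of "pgrads (X \<alpha> x0 k) - pgrads (stack xs)"]
      norm_triangle_ineq[of "track_dev \<alpha> x0 k"] by (smt (verit))
  also have "\<dots> \<le> nC (track_dev \<alpha> x0 k) + n * n * (L * norm (X \<alpha> x0 k - stack xs))"
    using pgrads_lipschitz n_ge_1 by (simp add: mult_left_mono)
  also have "\<dots> \<le> nC (track_dev \<alpha> x0 k) + n * n * (L * (nR (cons_dev \<alpha> x0 k) + n * opt_err \<alpha> x0 k))"
    using norm_X_dev_le[unfolded cons_err_def] n_ge_1 L by (simp add: mult_left_mono)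
  finally show ?thesis by (simp add: track_err_def cons_err_def algebra_simps)
qed

lemma cons_err_Suc_le:
  assumes "0 \<le> \<alpha>"
  shows "cons_err \<alpha> x0 (Suc k) \<le> \<sigma>R * cons_err \<alpha> x0 k + \<alpha> * cR * norm (Y \<alpha> x0 k)"
proof -
  define e where "e = cons_dev \<alpha> x0 k"
  have "cons_dev \<alpha> x0 (Suc k) = Rdev (X \<alpha> x0 k - \<alpha> *\<^sub>R Y \<alpha> x0 k)"
    by (simp add: cons_dev_def X_Suc uavg_Rmix Rdev_eq)
  also have "X \<alpha> x0 k - \<alpha> *\<^sub>R Y \<alpha> x0 k = (e - \<alpha> *\<^sub>R Y \<alpha> x0 k) + stack (uavg (X \<alpha> x0 k))"
    by (simp add: e_def cons_dev_def)
  also have "Rdev \<dots> = Rdev (e - \<alpha> *\<^sub>R Y \<alpha> x0 k)"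
    by (simp add: Rdev_add Rdev_stack)
  finally have "cons_dev \<alpha> x0 (Suc k) = Rdev (e - \<alpha> *\<^sub>R Y \<alpha> x0 k)" .
  then have "nR (cons_dev \<alpha> x0 (Suc k)) \<le> \<sigma>R * nR (e - \<alpha> *\<^sub>R Y \<alpha> x0 k)"
    by (simp add: nR_Rdev)
  also have "\<dots> \<le> \<sigma>R * (nR e + \<alpha> * nR (Y \<alpha> x0 k))"
    using nR_triangle[of e "(- \<alpha>) *\<^sub>R Y \<alpha> x0 k"] nR_scaleR[of "- \<alpha>"] assms \<sigma>R
    by (intro mult_left_mono) auto
  also have "\<dots> \<le> \<sigma>R * nR e + \<alpha> * (cR * norm (Y \<alpha> x0 k))"
  proof -
    have "\<sigma>R * (\<alpha> * nR (Y \<alpha> x0 k)) \<le> \<alpha> * nR (Y \<alpha> x0 k)"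
      using \<sigma>R assms nR_nonneg by (simp add: mult_left_le_one_le)
    also have "\<dots> \<le> \<alpha> * (cR * norm (Y \<alpha> x0 k))"
      using assms nR_le by (simp add: mult_left_mono)
    finally show ?thesis by (simp add: distrib_left)
  qed
  finally show ?thesis by (simp add: e_def cons_err_def mult.assoc)
qed

lemma uavg_Vproj: "uavg (Vproj z) = (\<Sum>b\<in>UNIV. weight (cl b) *\<^sub>R z $ b)"
proof -
  have row: "u a *\<^sub>R Vproj z $ a = (\<Sum>b\<in>UNIV. (if cl a = cl b then u a * v a else 0) *\<^sub>R z $ b)" for a
  proof -
    have "(\<Sum>b\<in>UNIV. (if cl a = cl b then u a * v a else 0) *\<^sub>R z $ b)
        = (\<Sum>b\<in>{b. cl b = cl a}. (u a * v a) *\<^sub>R z $ b)"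
      by (simp add: sum.inter_filter[symmetric] eq_commute if_distrib[of "\<lambda>t. t *\<^sub>R z $ _"] cong: if_cong)
    then show ?thesis
      by (simp add: Vproj_def cluster_total_def scaleR_sum_right)
  qed
  have col: "(\<Sum>a\<in>UNIV. (if cl a = cl b then u a * v a else 0) *\<^sub>R z $ b) = weight (cl b) *\<^sub>R z $ b" for b
    by (simp add: weight_def scaleR_sum_left[symmetric] sum.inter_filter[symmetric])
  have "uavg (Vproj z) = (\<Sum>a\<in>UNIV. \<Sum>b\<in>UNIV. (if cl a = cl b then u a * v a else 0) *\<^sub>R z $ b)"
    by (simp add: uavg_def row)
  also have "\<dots> = (\<Sum>b\<in>UNIV. weight (cl b) *\<^sub>R z $ b)"
    by (subst sum.swap) (simp add: col)
  finally show ?thesis .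
qed

text \<open>Up to the tracking and consensus errors, the average moves along the weighted game map.\<close>
lemma uavg_Y_eq:
  "uavg (Y \<alpha> x0 k) = uavg (track_dev \<alpha> x0 k) + wgame_map (uavg (X \<alpha> x0 k))
     + (\<Sum>b\<in>UNIV. weight (cl b) *\<^sub>R (pg b (X \<alpha> x0 k $ b) - pg b (uavg (X \<alpha> x0 k))))"
proof -
  have "Y \<alpha> x0 k = track_dev \<alpha> x0 k + Vproj (pgrads (X \<alpha> x0 k))"
    by (simp add: track_dev_def Vproj_Y)
  then show ?thesis
    by (simp add: uavg_add uavg_Vproj pgrads_def wgame_map_def scaleR_diff_right sum_subtractf)
qed

lemma norm_weighted_pgrad_dev_le:
  "norm (\<Sum>b\<in>UNIV. weight (cl b) *\<^sub>R (pg b (X \<alpha> x0 k $ b) - pg b (uavg (X \<alpha> x0 k))))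
     \<le> n * L * cons_err \<alpha> x0 k"
proof -
  have "norm (weight (cl b) *\<^sub>R (pg b (X \<alpha> x0 k $ b) - pg b (uavg (X \<alpha> x0 k)))) \<le> L * cons_err \<alpha> x0 k" for b
  proof -
    have "norm (weight (cl b) *\<^sub>R (pg b (X \<alpha> x0 k $ b) - pg b (uavg (X \<alpha> x0 k))))
        \<le> norm (pg b (X \<alpha> x0 k $ b) - pg b (uavg (X \<alpha> x0 k)))"
      using weight_nonneg weight_le_1 by (simp add: mult_left_le_one_le)
    also have "\<dots> \<le> L * norm (cons_dev \<alpha> x0 k $ b)"
      using lip by (simp add: cons_dev_def stack_def)
    also have "\<dots> \<le> L * cons_err \<alpha> x0 k"
      using order_trans[OF Finite_Cartesian_Product.norm_nth_le nR_ge] L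
      by (simp add: cons_err_def mult_left_mono)
    finally show ?thesis .
  qed
  then have "norm (\<Sum>b\<in>UNIV. weight (cl b) *\<^sub>R (pg b (X \<alpha> x0 k $ b) - pg b (uavg (X \<alpha> x0 k))))
      \<le> (\<Sum>b\<in>(UNIV::'a set). L * cons_err \<alpha> x0 k)"
    by (intro order_trans[OF norm_sum] sum_mono)
  then show ?thesis by (simp add: n_def)
qed

lemma opt_err_Suc_le:
  assumes \<alpha>: "0 \<le> \<alpha>" "\<alpha> * (n * L)\<^sup>2 \<le> \<mu>" "\<alpha> * rate \<le> 1"
  shows "opt_err \<alpha> x0 (Suc k) \<le> (1 - \<alpha> * rate) * opt_err \<alpha> x0 k
           + \<alpha> * (n / sqrt min_weight) * (track_err \<alpha> x0 k + L * cons_err \<alpha> x0 k)"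
proof -
  define xb where "xb = uavg (X \<alpha> x0 k)"
  define r where "r = uavg (track_dev \<alpha> x0 k)
    + (\<Sum>b\<in>UNIV. weight (cl b) *\<^sub>R (pg b (X \<alpha> x0 k $ b) - pg b xb))"
  have "uavg (X \<alpha> x0 (Suc k)) - xs = (xb - xs) - \<alpha> *\<^sub>R (wgame_map xb - wgame_map xs) - \<alpha> *\<^sub>R r"
    using uavg_Y_eq[of \<alpha> x0 k]
    by (simp add: X_Suc uavg_Rmix uavg_diff uavg_scaleR wgame_map_xs xb_def r_def algebra_simps)
  then have "rescale (uavg (X \<alpha> x0 (Suc k)) - xs)
      = (rescale (xb - xs) - \<alpha> *\<^sub>R rescale (wgame_map xb - wgame_map xs)) - \<alpha> *\<^sub>R rescale r"
    by (simp only: rescale_diff rescale_scaleR)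
  then have "opt_err \<alpha> x0 (Suc k)
      \<le> norm (rescale (xb - xs) - \<alpha> *\<^sub>R rescale (wgame_map xb - wgame_map xs)) + \<alpha> * norm (rescale r)"
    using \<alpha>(1) norm_triangle_ineq4[of "rescale (xb - xs) - \<alpha> *\<^sub>R rescale (wgame_map xb - wgame_map xs)"
        "\<alpha> *\<^sub>R rescale r"] by (simp add: opt_err_def)
  also have "\<dots> \<le> (1 - \<alpha> * rate) * opt_err \<alpha> x0 k + \<alpha> * (norm r / sqrt min_weight)"
    using rescaled_gradient_step_contracts[OF \<alpha>, of xb xs] mult_left_mono[OF norm_rescale_le[of r] \<alpha>(1)]
    by (simp add: opt_err_def xb_def)
  also have "\<dots> \<le> (1 - \<alpha> * rate) * opt_err \<alpha> x0 k
      + \<alpha> * (n / sqrt min_weight) * (track_err \<alpha> x0 k + L * cons_err \<alpha> x0 k)"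
  proof -
    have r: "norm r \<le> n * track_err \<alpha> x0 k + n * L * cons_err \<alpha> x0 k"
      using norm_uavg_le[of "track_dev \<alpha> x0 k"] nC_ge[of "track_dev \<alpha> x0 k"] n_ge_1
        norm_weighted_pgrad_dev_le[of \<alpha> x0 k] norm_triangle_ineq
      unfolding r_def xb_def track_err_def by (smt (verit) mult_left_mono)
    then have "norm r / sqrt min_weight \<le> (n / sqrt min_weight) * (track_err \<alpha> x0 k + L * cons_err \<alpha> x0 k)"
      using divide_right_mono[OF r, of "sqrt min_weight"] min_weight_pos
      by (simp add: algebra_simps add_divide_distrib)
    then have "\<alpha> * (norm r / sqrt min_weight)
        \<le> \<alpha> * ((n / sqrt min_weight) * (track_err \<alpha> x0 k + L * cons_err \<alpha> x0 k))"
      by (rule mult_left_mono) (rule \<alpha>(1))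
    then show ?thesis
      using add_left_mono by (simp only: mult.assoc)
  qed
  finally show ?thesis .
qed

lemma track_dev_Suc_eq:
  "track_dev \<alpha> x0 (Suc k) = Cdev (track_dev \<alpha> x0 k)
     + ((pgrads (X \<alpha> x0 (Suc k)) - pgrads (X \<alpha> x0 k)) - Vproj (pgrads (X \<alpha> x0 (Suc k)) - pgrads (X \<alpha> x0 k)))"
proof -
  define D where "D = pgrads (X \<alpha> x0 (Suc k)) - pgrads (X \<alpha> x0 k)"
  have "Y \<alpha> x0 k = track_dev \<alpha> x0 k + Vproj (Y \<alpha> x0 k)"
    by (simp add: track_dev_def)
  then have "Cdev (Y \<alpha> x0 k) = Cdev (track_dev \<alpha> x0 k)"
    by (metis Cdev_Vproj Cdev_add add.right_neutral)
  moreover have "track_dev \<alpha> x0 (Suc k) = Cdev (Y \<alpha> x0 k) + (D - Vproj D)"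
    by (simp add: track_dev_def Y_Suc Cdev_eq Vproj_add Vproj_diff Vproj_Cmix D_def)
  ultimately show ?thesis
    by (simp add: D_def)
qed

lemma norm_X_Suc_diff_le:
  assumes "0 \<le> \<alpha>"
  shows "norm (X \<alpha> x0 (Suc k) - X \<alpha> x0 k) \<le> (n * n + 1) * cons_err \<alpha> x0 k + \<alpha> * (n * n) * norm (Y \<alpha> x0 k)"
proof -
  define e where "e = cons_dev \<alpha> x0 k"
  have "X \<alpha> x0 k = e + stack (uavg (X \<alpha> x0 k))"
    by (simp add: e_def cons_dev_def)
  then have "X \<alpha> x0 (Suc k) = Rmix e + stack (uavg (X \<alpha> x0 k)) - \<alpha> *\<^sub>R Rmix (Y \<alpha> x0 k)"
    by (metis X_Suc Rmix_def Rmix_stack kact_add kact_diff kact_scaleR)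
  then have "X \<alpha> x0 (Suc k) - X \<alpha> x0 k = Rmix e - e - \<alpha> *\<^sub>R Rmix (Y \<alpha> x0 k)"
    by (simp add: e_def cons_dev_def)
  then have "norm (X \<alpha> x0 (Suc k) - X \<alpha> x0 k) \<le> norm (Rmix e) + norm e + \<alpha> * norm (Rmix (Y \<alpha> x0 k))"
    using assms norm_triangle_ineq4[of "Rmix e - e" "\<alpha> *\<^sub>R Rmix (Y \<alpha> x0 k)"] norm_triangle_ineq4[of "Rmix e" e]
    by simp
  also have "\<dots> \<le> (n * n + 1) * norm e + \<alpha> * (n * n * norm (Y \<alpha> x0 k))"
    using norm_Rmix_le[of e] mult_left_mono[OF norm_Rmix_le[of "Y \<alpha> x0 k"] assms] by (simp add: algebra_simps)
  also have "\<dots> \<le> (n * n + 1) * cons_err \<alpha> x0 k + \<alpha> * (n * n) * norm (Y \<alpha> x0 k)"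
    using nR_ge[of e] n_ge_1 by (simp add: e_def cons_err_def mult_left_mono)
  finally show ?thesis .
qed

lemma track_err_Suc_le:
  assumes "0 \<le> \<alpha>"
  shows "track_err \<alpha> x0 (Suc k) \<le> \<sigma>C * track_err \<alpha> x0 k
    + cC * (1 + n * n) * L * ((n * n + 1) * cons_err \<alpha> x0 k + \<alpha> * (n * n) * norm (Y \<alpha> x0 k))"
proof -
  define D where "D = pgrads (X \<alpha> x0 (Suc k)) - pgrads (X \<alpha> x0 k)"
  have "norm (D - Vproj D) \<le> (1 + n * n) * norm D"
    using norm_triangle_ineq4[of D "Vproj D"] norm_Vproj_le[of D] by (simp add: algebra_simps)
  also have "\<dots> \<le> (1 + n * n) * (L * ((n * n + 1) * cons_err \<alpha> x0 k + \<alpha> * (n * n) * norm (Y \<alpha> x0 k)))"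
    using pgrads_lipschitz[of "X \<alpha> x0 (Suc k)" "X \<alpha> x0 k"] norm_X_Suc_diff_le[OF assms, of x0 k] L n_ge_1
    by (intro mult_left_mono) (auto simp: D_def intro: order_trans mult_left_mono)
  finally have "nC (D - Vproj D)
      \<le> cC * ((1 + n * n) * (L * ((n * n + 1) * cons_err \<alpha> x0 k + \<alpha> * (n * n) * norm (Y \<alpha> x0 k))))"
    using nC_le[of "D - Vproj D"] cC_ge_1 by (smt (verit) mult_left_mono)
  then show ?thesis
    using track_dev_Suc_eq[of \<alpha> x0 k] nC_triangle nC_Cdev
    unfolding track_err_def D_def by (smt (verit) mult.assoc)
qed

definition Y_gain :: real where "Y_gain = 1 + n * n * n * L"
definition cons_gain :: real where "cons_gain = cR * Y_gain"
definition opt_gain :: real where "opt_gain = n / sqrt min_weight * (1 + L)"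
definition track_gain0 :: real where "track_gain0 = cC * (1 + n * n) * L * (n * n + 1)"
definition track_gain :: real where "track_gain = cC * (1 + n * n) * L * (n * n) * Y_gain"

lemma gains_nonneg: "0 \<le> cons_gain" "0 \<le> opt_gain" "0 \<le> track_gain0" "0 \<le> track_gain"
  using cR_ge_1 cC_ge_1 n_ge_1 L min_weight_pos
  by (simp_all add: cons_gain_def opt_gain_def track_gain0_def track_gain_def Y_gain_def)

lemma errors_nonneg: "0 \<le> cons_err \<alpha> x0 k" "0 \<le> opt_err \<alpha> x0 k" "0 \<le> track_err \<alpha> x0 k"
  by (simp_all add: cons_err_def opt_err_def track_err_def nR_nonneg nC_nonneg)

lemma norm_Y_le_errors:
  "norm (Y \<alpha> x0 k) \<le> Y_gain * (cons_err \<alpha> x0 k + opt_err \<alpha> x0 k + track_err \<alpha> x0 k)"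
proof -
  have "n * n * 1 * L \<le> n * n * n * L"
    using n_ge_1 L by (intro mult_right_mono mult_left_mono) auto
  moreover have "0 \<le> n * n * n * L"
    using n_ge_1 L by simp
  ultimately
  have "n * n * L \<le> Y_gain" "n * n * n * L \<le> Y_gain" "1 \<le> Y_gain"
    unfolding Y_gain_def by linarith+
  then have "track_err \<alpha> x0 k + n * n * L * (cons_err \<alpha> x0 k + n * opt_err \<alpha> x0 k)
      \<le> Y_gain * (cons_err \<alpha> x0 k + opt_err \<alpha> x0 k + track_err \<alpha> x0 k)"
    using errors_nonneg[of \<alpha> x0 k]
      mult_right_mono[of "n * n * L" Y_gain "cons_err \<alpha> x0 k"]
      mult_right_mono[of "n * n * n * L" Y_gain "opt_err \<alpha> x0 k"]
      mult_right_mono[of 1 Y_gain "track_err \<alpha> x0 k"]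
    by (simp add: algebra_simps)
  then show ?thesis
    using norm_Y_le order_trans by blast
qed

lemma errors_Suc_le:
  fixes x0 :: "'a \<Rightarrow> real^'q" and k :: nat
  assumes \<alpha>: "0 \<le> \<alpha>" "\<alpha> * (n * L)\<^sup>2 \<le> \<mu>" "\<alpha> * rate \<le> 1"
  defines "A \<equiv> cons_err \<alpha> x0 k" and "B \<equiv> opt_err \<alpha> x0 k" and "E \<equiv> track_err \<alpha> x0 k"
  shows "cons_err \<alpha> x0 (Suc k) \<le> (\<sigma>R + \<alpha> * cons_gain) * A + \<alpha> * cons_gain * B + \<alpha> * cons_gain * E"
    and "opt_err \<alpha> x0 (Suc k) \<le> \<alpha> * opt_gain * A + (1 - \<alpha> * rate) * B + \<alpha> * opt_gain * E"
    and "track_err \<alpha> x0 (Suc k)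
      \<le> (track_gain0 + \<alpha> * track_gain) * A + \<alpha> * track_gain * B + (\<sigma>C + \<alpha> * track_gain) * E"
proof -
  have Y: "\<alpha> * norm (Y \<alpha> x0 k) \<le> \<alpha> * (Y_gain * (A + B + E))"
    using norm_Y_le_errors \<alpha>(1) by (simp add: A_def B_def E_def mult_left_mono)
  have "cons_err \<alpha> x0 (Suc k) \<le> \<sigma>R * A + cR * (\<alpha> * norm (Y \<alpha> x0 k))"
    using cons_err_Suc_le[OF \<alpha>(1), of x0 k] by (simp add: A_def ac_simps)
  also have "\<dots> \<le> \<sigma>R * A + cR * (\<alpha> * (Y_gain * (A + B + E)))"
    using Y cR_ge_1 by (simp add: mult_left_mono)
  finally show "cons_err \<alpha> x0 (Suc k) \<le> (\<sigma>R + \<alpha> * cons_gain) * A + \<alpha> * cons_gain * B + \<alpha> * cons_gain * E"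
    by (simp add: cons_gain_def algebra_simps)
  have "track_err \<alpha> x0 k + L * cons_err \<alpha> x0 k \<le> (1 + L) * (A + E)"
    using errors_nonneg[of \<alpha> x0 k] L by (simp add: A_def E_def algebra_simps)
  then have "\<alpha> * (n / sqrt min_weight) * (track_err \<alpha> x0 k + L * cons_err \<alpha> x0 k)
      \<le> \<alpha> * (n / sqrt min_weight) * ((1 + L) * (A + E))"
    using \<alpha>(1) n_ge_1 min_weight_pos by (intro mult_left_mono) auto
  moreover have "(1 - \<alpha> * rate) * B + \<alpha> * (n / sqrt min_weight) * ((1 + L) * (A + E))
      = \<alpha> * opt_gain * A + (1 - \<alpha> * rate) * B + \<alpha> * opt_gain * E"
    by (simp add: opt_gain_def algebra_simps add_divide_distrib)
  ultimately show "opt_err \<alpha> x0 (Suc k) \<le> \<alpha> * opt_gain * A + (1 - \<alpha> * rate) * B + \<alpha> * opt_gain * E"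
    using opt_err_Suc_le[OF \<alpha>, of x0 k] unfolding B_def by linarith
  have "track_err \<alpha> x0 (Suc k)
      \<le> \<sigma>C * E + cC * (1 + n * n) * L * ((n * n + 1) * A + n * n * (\<alpha> * norm (Y \<alpha> x0 k)))"
    using track_err_Suc_le[OF \<alpha>(1), of x0 k] by (simp add: A_def E_def ac_simps)
  also have "\<dots> \<le> \<sigma>C * E + cC * (1 + n * n) * L * ((n * n + 1) * A + n * n * (\<alpha> * (Y_gain * (A + B + E))))"
  proof -
    have "n * n * (\<alpha> * norm (Y \<alpha> x0 k)) \<le> n * n * (\<alpha> * (Y_gain * (A + B + E)))"
      using Y n_ge_1 by (simp add: mult_left_mono)
    then show ?thesis
      using cC_ge_1 L n_ge_1 by (simp add: mult_left_mono)
  qed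
  finally show "track_err \<alpha> x0 (Suc k)
      \<le> (track_gain0 + \<alpha> * track_gain) * A + \<alpha> * track_gain * B + (\<sigma>C + \<alpha> * track_gain) * E"
    by (simp add: track_gain0_def track_gain_def algebra_simps)
qed

lemma norm_iter_dev_le:
  assumes "0 < p" "0 \<le> s"
  shows "norm (fst (iter blk cl grad R C \<alpha> x0 k) a - xs)
    \<le> (1 + n / p) * (cons_err \<alpha> x0 k + p * opt_err \<alpha> x0 k + s * track_err \<alpha> x0 k)"
proof -
  define V where "V = cons_err \<alpha> x0 k + p * opt_err \<alpha> x0 k + s * track_err \<alpha> x0 k"
  have "norm (fst (iter blk cl grad R C \<alpha> x0 k) a - xs) = norm ((X \<alpha> x0 k - stack xs) $ a)"
    by (simp add: X_def stack_def)
  also have "\<dots> \<le> cons_err \<alpha> x0 k + n * opt_err \<alpha> x0 k"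
    using Finite_Cartesian_Product.norm_nth_le norm_X_dev_le order_trans by blast
  also have "\<dots> \<le> V + (n / p) * V"
  proof -
    have "n * opt_err \<alpha> x0 k = (n / p) * (p * opt_err \<alpha> x0 k)"
      using assms by simp
    also have "\<dots> \<le> (n / p) * V"
      using errors_nonneg[of \<alpha> x0 k] assms n_ge_1 by (intro mult_left_mono) (auto simp: V_def)
    moreover have "cons_err \<alpha> x0 k \<le> V"
      using errors_nonneg[of \<alpha> x0 k] assms by (simp add: V_def)
    ultimately show ?thesis
      by linarith
  qed
  finally show ?thesis
    by (simp add: V_def algebra_simps)
qed

lemma linear_convergence:
  "\<exists>\<alpha>>0. \<forall>x0. \<exists>c>0. \<exists>\<rho>. 0 < \<rho> \<and> \<rho> < 1 \<and>
     (\<forall>a k. norm (fst (iter blk cl grad R C \<alpha> x0 k) a - xs) \<le> c * \<rho> ^ k)"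
proof -
  have "0 < \<mu> / (n * L)\<^sup>2"
    using \<mu> n_ge_1 L by simp
  then obtain \<alpha> p s \<rho> where \<alpha>: "0 < \<alpha>" "\<alpha> \<le> \<mu> / (n * L)\<^sup>2" "\<alpha> * rate \<le> 1"
    and ps: "0 < p" "0 < s" and \<rho>: "0 < \<rho>" "\<rho> < 1"
    and cols: "(\<sigma>R + \<alpha> * cons_gain) + p * (\<alpha> * opt_gain) + s * (track_gain0 + \<alpha> * track_gain) \<le> \<rho>"
      "\<alpha> * cons_gain + p * (1 - \<alpha> * rate) + s * (\<alpha> * track_gain) \<le> \<rho> * p"
      "\<alpha> * cons_gain + p * (\<alpha> * opt_gain) + s * (\<sigma>C + \<alpha> * track_gain) \<le> \<rho> * s"
    using small_gain_weights[OF \<sigma>R \<sigma>C rate_pos gains_nonneg] by blast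
  have \<alpha>L: "\<alpha> * (n * L)\<^sup>2 \<le> \<mu>"
    using \<alpha>(2) n_ge_1 L by (simp add: field_simps)
  have "\<exists>c>0. \<exists>\<rho>. 0 < \<rho> \<and> \<rho> < 1 \<and> (\<forall>a k. norm (fst (iter blk cl grad R C \<alpha> x0 k) a - xs) \<le> c * \<rho> ^ k)"
    for x0
  proof -
    define V where "V k = cons_err \<alpha> x0 k + p * opt_err \<alpha> x0 k + s * track_err \<alpha> x0 k" for k
    have "V (Suc k) \<le> \<rho> * V k" for k
      unfolding V_def
      by (rule weighted_sum_contracts[OF _ _ _ _ _ errors_Suc_le[OF less_imp_le[OF \<alpha>(1)] \<alpha>L \<alpha>(3)] cols])
        (use errors_nonneg ps in \<open>simp_all add: less_imp_le\<close>)
    then have geometric: "V k \<le> \<rho> ^ k * V 0" for k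
      by (rule seq_le_geometric) (use \<rho> in simp)
    have bound: "norm (fst (iter blk cl grad R C \<alpha> x0 k) a - xs) \<le> ((1 + n / p) * V 0) * \<rho> ^ k" for a k
    proof -
      have "norm (fst (iter blk cl grad R C \<alpha> x0 k) a - xs) \<le> (1 + n / p) * V k"
        using norm_iter_dev_le[OF ps(1) less_imp_le[OF ps(2)]] by (simp add: V_def)
      also have "\<dots> \<le> (1 + n / p) * (\<rho> ^ k * V 0)"
        using geometric ps n_ge_1 by (intro mult_left_mono) simp_all
      finally show ?thesis
        by (simp only: ac_simps)
    qed
    have "0 \<le> (1 + n / p) * V 0"
      using errors_nonneg[of \<alpha> x0 0] ps n_ge_1 by (simp add: V_def)
    moreover have "norm (fst (iter blk cl grad R C \<alpha> x0 k) a - xs) \<le> ((1 + n / p) * V 0 + 1) * \<rho> ^ k" for a k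
      using order_trans[OF bound mult_right_mono[of _ "(1 + n / p) * V 0 + 1"]] \<rho> by simp
    ultimately show ?thesis
      using \<rho> by (intro exI[of _ "(1 + n / p) * V 0 + 1"]) auto
  qed
  then show ?thesis
    using \<alpha>(1) by blast
qed

end

lemma ne_tracking_exists:
  fixes cl :: "'a::finite \<Rightarrow> 'h" and blk :: "'q::finite \<Rightarrow> 'h"
  assumes A1: "A1 cl C" and A2: "A2 R" and L: "0 < L"
    and lip: "\<And>a x z. norm (pgrad blk cl grad a x - pgrad blk cl grad a z) \<le> L * norm (x - z)"
    and \<mu>: "0 < \<mu>"
    and smon: "\<And>x z. \<mu> * (norm (x - z))\<^sup>2 \<le> (game_map blk cl grad x - game_map blk cl grad z) \<bullet> (x - z)"
    and xs: "game_map blk cl grad xs = 0"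
  shows "\<exists>u v nR nC cR cC \<sigma>R \<sigma>C. ne_tracking cl blk grad R C L \<mu> xs u v nR nC cR cC \<sigma>R \<sigma>C"
proof -
  obtain u where u: "\<And>j. 0 < u j" "(\<Sum>j\<in>UNIV. u j) = 1" "\<And>j. (\<Sum>l\<in>UNIV. u l * R $ l $ j) = u j"
    and "\<exists>nR cR \<sigma>R. contracting_norm (kact (\<lambda>a b. R $ a $ b - u b) :: (real^'q)^'a \<Rightarrow> _) nR cR \<sigma>R"
    using A2_consensus[OF A2] by blast
  moreover obtain v where v: "\<And>j. 0 < v j" "\<And>i. (\<Sum>j\<in>{j. cl j = cl i}. v j) = 1"
    "\<And>j. (\<Sum>l\<in>UNIV. v l * C $ j $ l) = v j"
    and "\<exists>nC cC \<sigma>C. contracting_norm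
      (kact (\<lambda>a b. C $ a $ b - (if cl a = cl b then v a else 0)) :: (real^'q)^'a \<Rightarrow> _) nC cC \<sigma>C"
    using A1_tracking[OF A1] by blast
  ultimately show ?thesis
    unfolding ne_tracking_def using A1 A2 L lip \<mu> smon xs by blast
qed

lemma is_NE_iff_eq_zero_of_game_map:
  fixes cl :: "'a::finite \<Rightarrow> 'h" and blk :: "'q::finite \<Rightarrow> 'h"
  assumes grad: "\<And>a x. GDERIV (f a) x :> grad a x" and cvx: "\<And>a. convex_on UNIV (f a)"
    and \<mu>: "0 < \<mu>"
    and smon: "\<And>x z. \<mu> * (norm (x - z))\<^sup>2 \<le> (game_map blk cl grad x - game_map blk cl grad z) \<bullet> (x - z)"
    and xs: "game_map blk cl grad xs = 0"
  shows "is_NE blk cl f x \<longleftrightarrow> x = xs"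
proof -
  have "is_NE blk cl f x \<longleftrightarrow> game_map blk cl grad x = 0"
    using game_map_eq_0_if_is_NE[where f=f and grad=grad, OF grad]
      is_NE_if_game_map_eq_0[where f=f and grad=grad, OF grad cvx] by blast
  also have "\<dots> \<longleftrightarrow> x = xs"
    using strongly_monotone_zero_unique[where M="game_map blk cl grad", OF \<mu> smon _ xs] xs by blast
  finally show ?thesis .
qed

theorem theorem1:
  fixes cl :: "'a::finite \<Rightarrow> 'h::finite"
    and blk :: "'q::finite \<Rightarrow> 'h"
    and f :: "'a \<Rightarrow> real^'q \<Rightarrow> real"
    and grad :: "'a \<Rightarrow> real^'q \<Rightarrow> real^'q"
    and C R :: "real^'a^'a"
    and L \<mu> :: real
  assumes hA1: "A1 cl C"
    and hA2: "A2 R"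
    and grad: "\<And>a x. GDERIV (f a) x :> grad a x"
    and cont: "\<And>a. continuous_on UNIV (grad a)"
    and cvx: "\<And>a. convex_on UNIV (f a)"
    and L: "L > 0"
    and lip: "\<And>a x z. norm (pgrad blk cl grad a x - pgrad blk cl grad a z) \<le> L * norm (x - z)"
    and mu: "\<mu> > 0"
    and smon: "\<And>x z. (game_map blk cl grad x - game_map blk cl grad z) \<bullet> (x - z) \<ge> \<mu> * (norm (x - z))\<^sup>2"
  shows "\<exists>xs. (\<forall>x. is_NE blk cl f x \<longleftrightarrow> x = xs)
           \<and> (\<forall>h. (\<Sum>a\<in>{a. cl a = h}. pgrad blk cl grad a xs) = 0)
           \<and> (\<exists>\<alpha>>0. \<forall>x0.
                (\<forall>a. (\<lambda>k. fst (iter blk cl grad R C \<alpha> x0 k) a) \<longlonglongrightarrow> xs)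
              \<and> (\<exists>c>0. \<exists>\<rho>. 0 < \<rho> \<and> \<rho> < 1 \<and>
                   (\<forall>a k. norm (fst (iter blk cl grad R C \<alpha> x0 k) a - xs) \<le> c * \<rho> ^ k)))"
proof -
  obtain xs where xs: "game_map blk cl grad xs = 0"
    using strongly_monotone_zero_exists[OF game_map_lipschitz[OF lip]] L mu smon by fastforce
  then obtain u v nR nC cR cC \<sigma>R \<sigma>C where "ne_tracking cl blk grad R C L \<mu> xs u v nR nC cR cC \<sigma>R \<sigma>C"
    using ne_tracking_exists[OF hA1 hA2 L lip mu] smon by blast
  then interpret ne_tracking cl blk grad R C L \<mu> xs u v nR nC cR cC \<sigma>R \<sigma>C .
  obtain \<alpha> where "0 < \<alpha>" and conv: "\<forall>x0. \<exists>c>0. \<exists>\<rho>. 0 < \<rho> \<and> \<rho> < 1 \<and>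
      (\<forall>a k. norm (fst (iter blk cl grad R C \<alpha> x0 k) a - xs) \<le> c * \<rho> ^ k)"
    using linear_convergence by blast
  moreover have "(\<lambda>k. fst (iter blk cl grad R C \<alpha> x0 k) a) \<longlonglongrightarrow> xs" for x0 a
    using conv LIMSEQ_if_geometric_bound[of "\<lambda>k. fst (iter blk cl grad R C \<alpha> x0 k) a" xs] by blast
  ultimately show ?thesis
    using is_NE_iff_eq_zero_of_game_map[OF grad cvx mu smon xs] cluster_pgrad_sum_eq_0[OF xs] by blast
qed

end
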